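(* Let $n$ be divisible by $f_Kh_K$, $m=|\mu(K)|$, let $\pi\in W_0^K(p,n)$, and let $\bar\pi\in W_0^K(p^\infty)$ be its image (the class of $\pi^n\in W_0^K(p^n)$). Then the fixed field in $\mathbb{Q}^{\mathrm{al}}$ of the stabilizer $\{\sigma\in\mathrm{Gal}(\mathbb{Q}^{\mathrm{al}}/\mathbb{Q}):\sigma\bar\pi=\bar\pi\}$ equals $\mathbb{Q}[\pi^{mn}]$; equivalently, the centre of $\mathrm{End}(X(\bar\pi))$, where $X(\bar\pi)$ is the simple motive over $\mathbb{F}$ corresponding to $\bar\pi$, is $\mathbb{Q}[\pi^{mn}]$.
   Context: $\mathbb{Q}^{\mathrm{al}}\subset\mathbb{C}$, $p$ prime, $K\subset\mathbb{Q}^{\mathrm{al}}$ a CM field finite Galois over $\mathbb{Q}$, $\mu(K)$ its roots of unity, $f_K$, $h_K$ the common inertia degree and class-group order of the $p$-adic primes of $K$. A Weil $q$-number of weight $0$ ($q$ a power of $p$) is an algebraic $\pi$ with $|\pi'|=1$ for all complex conjugates and $q^N\pi$ integral for some $N$. $n_w(\pi)=\frac{\mathrm{ord}_w(\pi)}{\mathrm{ord}_w(q)}[K_w:\mathbb{Q}_p]$; $W_0^K(q)$ = Weil $q$-numbers of weight $0$ in $K$ with all $n_w\in\mathbb{Z}$; $W_0^K(p^\infty)=\varinjlim W_0^K(p^n)$ (transition maps $\pi\mapsto\pi^{n'/n}$), a Galois module; $W_0^K(p,n)$ = Weil $p$-numbers of weight $0$ with $\pi^n\in W_0^K(p^n)$.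 $\mathbb{Q}[\pi^{mn}]$ is the subfield of $\mathbb{Q}^{\mathrm{al}}$ generated by $\pi^{mn}$. $\mathbb{F}$ is an algebraic closure of $\mathbb{F}_p$; assuming the Tate conjecture, simple motives over $\mathbb{F}$ (numerical equivalence) correspond to Galois orbits of elements of $\varinjlim_n W(p^n)$ (Weil numbers), and the centre of $\mathrm{End}(X(\bar\pi))$ is the fixed field of the stabilizer of $\bar\pi$. *)

theory Defs
  imports "HOL-Analysis.Analysis" "HOL-Computational_Algebra.Polynomial"
begin

definition Qal :: "complex set" where
  "Qal = {z. algebraic z}"

text \<open>Elements of Gal(Q^al/Q): field automorphisms of Q^al (only their values on Q^al matter).\<close>
definition gal_aut :: "(complex \<Rightarrow> complex) \<Rightarrow> bool" where
  "gal_aut \<sigma> \<longleftrightarrow> bij_betw \<sigma> Qal Qal \<and>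
     (\<forall>x\<in>Qal. \<forall>y\<in>Qal. \<sigma> (x + y) = \<sigma> x + \<sigma> y \<and> \<sigma> (x * y) = \<sigma> x * \<sigma> y)"

definition is_subfield :: "complex set \<Rightarrow> bool" where
  "is_subfield F \<longleftrightarrow> 0 \<in> F \<and> 1 \<in> F \<and>
     (\<forall>x\<in>F. \<forall>y\<in>F. x + y \<in> F \<and> x * y \<in> F) \<and>
     (\<forall>x\<in>F. - x \<in> F \<and> inverse x \<in> F)"

text \<open>The subfield of C generated by a number (for algebraic alpha this is Q[alpha]).\<close>
definition gen_field :: "complex \<Rightarrow> complex set" where
  "gen_field \<alpha> = \<Inter> {F. is_subfield F \<and> \<alpha> \<in> F}"

definition fixed_field :: "(complex \<Rightarrow> complex) set \<Rightarrow> complex set" where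
  "fixed_field H = {x \<in> Qal. \<forall>\<sigma>\<in>H. \<sigma> x = x}"

definition finite_over_Q :: "complex set \<Rightarrow> bool" where
  "finite_over_Q K \<longleftrightarrow> (\<exists>B. finite B \<and> B \<subseteq> K \<and>
      K \<subseteq> {\<Sum>b\<in>B. of_rat (c b) * b | c. True})"

definition totally_real :: "complex set \<Rightarrow> bool" where
  "totally_real F \<longleftrightarrow> (\<forall>\<sigma>. gal_aut \<sigma> \<longrightarrow> \<sigma> ` F \<subseteq> \<real>)"

definition totally_imaginary :: "complex set \<Rightarrow> bool" where
  "totally_imaginary K \<longleftrightarrow> (\<forall>\<sigma>. gal_aut \<sigma> \<longrightarrow> \<not> \<sigma> ` K \<subseteq> \<real>)"

definition CM_galois_field :: "complex set \<Rightarrow> bool" where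
  "CM_galois_field K \<longleftrightarrow> is_subfield K \<and> K \<subseteq> Qal \<and> finite_over_Q K \<and>
     (\<forall>\<sigma>. gal_aut \<sigma> \<longrightarrow> \<sigma> ` K = K) \<and>
     totally_imaginary K \<and>
     (\<exists>F a. is_subfield F \<and> F \<subseteq> K \<and> totally_real F \<and> a \<in> K \<and> a \<notin> F \<and>
            K = {x + y * a | x y. x \<in> F \<and> y \<in> F})"

definition roots_of_unity_in :: "complex set \<Rightarrow> complex set" where
  "roots_of_unity_in K = {z \<in> K. \<exists>k>0. z ^ k = 1}"

definition ints_of :: "complex set \<Rightarrow> complex set" where
  "ints_of K = {x \<in> K. algebraic_int x}"

definition is_ideal :: "complex set \<Rightarrow> complex set \<Rightarrow> bool" where
  "is_ideal K I \<longleftrightarrow> I \<subseteq> ints_of K \<and> 0 \<in> I \<and>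
     (\<forall>x\<in>I. \<forall>y\<in>I. x + y \<in> I) \<and> (\<forall>r\<in>ints_of K. \<forall>x\<in>I. r * x \<in> I)"

definition ideal_prod :: "complex set \<Rightarrow> complex set \<Rightarrow> complex set \<Rightarrow> complex set" where
  "ideal_prod K I J = \<Inter> {L. is_ideal K L \<and> {a * b | a b. a \<in> I \<and> b \<in> J} \<subseteq> L}"

fun ideal_pow :: "complex set \<Rightarrow> complex set \<Rightarrow> nat \<Rightarrow> complex set" where
  "ideal_pow K I 0 = ints_of K"
| "ideal_pow K I (Suc k) = ideal_prod K I (ideal_pow K I k)"

definition principal_ideal :: "complex set \<Rightarrow> complex \<Rightarrow> complex set" where
  "principal_ideal K a = {r * a | r. r \<in> ints_of K}"

definition padic_prime :: "complex set \<Rightarrow> nat \<Rightarrow> complex set \<Rightarrow> bool" where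
  "padic_prime K p w \<longleftrightarrow> is_ideal K w \<and> w \<noteq> ints_of K \<and> w \<noteq> {0} \<and>
     (\<forall>a\<in>ints_of K. \<forall>b\<in>ints_of K. a * b \<in> w \<longrightarrow> a \<in> w \<or> b \<in> w) \<and>
     of_nat p \<in> w"

definition ord_int :: "complex set \<Rightarrow> complex set \<Rightarrow> complex \<Rightarrow> nat" where
  "ord_int K w a = (GREATEST k. a \<in> ideal_pow K w k)"

definition ord :: "complex set \<Rightarrow> complex set \<Rightarrow> complex \<Rightarrow> int" where
  "ord K w x = (THE z. \<exists>a b. a \<in> ints_of K \<and> b \<in> ints_of K \<and> a \<noteq> 0 \<and> b \<noteq> 0 \<and>
                   x = a / b \<and> z = int (ord_int K w a) - int (ord_int K w b))"

definition residue_card :: "complex set \<Rightarrow> complex set \<Rightarrow> nat" where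
  "residue_card K w = card {{y \<in> ints_of K. x - y \<in> w} | x. x \<in> ints_of K}"

definition inertia_deg :: "complex set \<Rightarrow> nat \<Rightarrow> complex set \<Rightarrow> nat" where
  "inertia_deg K p w = (THE f. residue_card K w = p ^ f)"

definition ram_index :: "complex set \<Rightarrow> nat \<Rightarrow> complex set \<Rightarrow> int" where
  "ram_index K p w = ord K w (of_nat p)"

text \<open>Local degree [K_w : Q_p] = e_w f_w.\<close>
definition local_deg :: "complex set \<Rightarrow> nat \<Rightarrow> complex set \<Rightarrow> int" where
  "local_deg K p w = ram_index K p w * int (inertia_deg K p w)"

definition class_order :: "complex set \<Rightarrow> complex set \<Rightarrow> nat" where
  "class_order K w = (LEAST h. h > 0 \<and> (\<exists>a \<in> ints_of K. ideal_pow K w h = principal_ideal K a))"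

definition weil0 :: "nat \<Rightarrow> complex \<Rightarrow> bool" where
  "weil0 q \<pi> \<longleftrightarrow> algebraic \<pi> \<and> (\<forall>\<sigma>. gal_aut \<sigma> \<longrightarrow> cmod (\<sigma> \<pi>) = 1) \<and>
     (\<exists>N. algebraic_int (of_nat q ^ N * \<pi>))"

definition n_w :: "complex set \<Rightarrow> nat \<Rightarrow> complex set \<Rightarrow> nat \<Rightarrow> complex \<Rightarrow> rat" where
  "n_w K p w q \<pi> = of_int (ord K w \<pi>) / of_int (ord K w (of_nat q)) * of_int (local_deg K p w)"

definition W0K :: "complex set \<Rightarrow> nat \<Rightarrow> nat \<Rightarrow> complex set" where
  "W0K K p a = {\<pi> \<in> K. weil0 (p ^ a) \<pi> \<and>
      (\<forall>w. padic_prime K p w \<longrightarrow> n_w K p w (p ^ a) \<pi> \<in> \<int>)}"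

definition W0K_pn :: "complex set \<Rightarrow> nat \<Rightarrow> nat \<Rightarrow> complex set" where
  "W0K_pn K p n = {\<pi>. weil0 p \<pi> \<and> \<pi> ^ n \<in> W0K K p n}"

text \<open>Equality in the direct limit W_0^K(p^infinity) of the classes of
  x in W_0^K(p^a) and y in W_0^K(p^b) (transition maps x \<mapsto> x^(c/a)).\<close>
definition lim_eq :: "nat \<times> complex \<Rightarrow> nat \<times> complex \<Rightarrow> bool" where
  "lim_eq u v \<longleftrightarrow> (\<exists>c. c > 0 \<and> fst u dvd c \<and> fst v dvd c \<and>
      snd u ^ (c div fst u) = snd v ^ (c div fst v))"

text \<open>Stabilizer in Gal(Q^al/Q) of the image of pi in W_0^K(p^infinity), i.e. of the class of (n, pi^n).\<close>
definition stabilizer :: "nat \<Rightarrow> complex \<Rightarrow> (complex \<Rightarrow> complex) set" where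
  "stabilizer n \<pi> = {\<sigma>. gal_aut \<sigma> \<and> lim_eq (n, \<sigma> (\<pi> ^ n)) (n, \<pi> ^ n)}"

end

(* Write \<beta> = \<pi>^n, which lies in K, and \<gamma> = \<beta>^m. If \<sigma> fixes the class of \<beta> in
   W_0^K(p^\<infinity>), then \<sigma>(\<beta>)^c = \<beta>^c for some c > 0, so \<sigma>(\<beta>)/\<beta> is a root of unity in K
   (K is Galois); the roots of unity of K form a finite group of order m, hence \<sigma>(\<gamma>) = \<gamma>.
   Conversely \<sigma>(\<gamma>) = \<gamma> says that \<sigma> fixes the class of \<beta> (take c = mn). So the stabilizer
   is Gal(Q^al/Q(\<gamma>)), and its fixed field is Q(\<gamma>) = Q[\<pi>^(mn)]: an element x outside a
   subfield L of Q^al is moved by an automorphism over L, obtained by sending x to another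
   root of its minimal polynomial over L (one exists in characteristic 0) and extending to
   Q^al by Zorn's lemma.

   Finiteness of the roots of unity of K: each one is a root of a monic integer polynomial
   of degree at most [K:Q] whose coefficients are bounded by 2^[K:Q] (Gauss's lemma, and all
   roots lie on the unit circle). *)

theory Submission
  imports Defs "HOL-Computational_Algebra.Computational_Algebra"
    "HOL-Computational_Algebra.Field_as_Ring"
begin

section \<open>Algebraic numbers form a field\<close>

interpretation Q: vector_space "\<lambda>(r::rat) (z::complex). of_rat r * z"
  by unfold_locales (auto simp: algebra_simps of_rat_add of_rat_mult)

lemma Q_span_mult:
  assumes "\<And>b. b \<in> B \<Longrightarrow> a * b \<in> Q.span C" and "v \<in> Q.span B"
  shows "a * v \<in> Q.span C"
  using assms(2)
proof (induction rule: Q.span_induct_alt)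
  case base
  then show ?case by (simp add: Q.span_zero)
next
  case (step r x y)
  have "a * (of_rat r * x + y) = of_rat r * (a * x) + a * y"
    by (simp add: algebra_simps)
  then show ?case
    using step assms(1) Q.span_add Q.span_scale by metis
qed

lemma of_rat_in_Q_span: "1 \<in> Q.span B \<Longrightarrow> of_rat r \<in> Q.span B"
  using Q.span_scale[of 1 B r] by simp

definition Q_algebra_span :: "complex set \<Rightarrow> bool" where
  "Q_algebra_span B \<longleftrightarrow> finite B \<and> 1 \<in> Q.span B \<and> (\<forall>a\<in>B. \<forall>b\<in>B. a * b \<in> Q.span B)"

lemma Q_algebra_span_mult:
  assumes "Q_algebra_span B" "u \<in> Q.span B" "v \<in> Q.span B"
  shows "u * v \<in> Q.span B"
proof -
  have "b * v \<in> Q.span B" if "b \<in> B" for b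
    using Q_span_mult[of B b B v] that assms by (auto simp: Q_algebra_span_def)
  then show ?thesis
    using Q_span_mult[of B v B u] assms(2) by (simp add: mult.commute)
qed

lemma Q_algebra_span_power:
  assumes "Q_algebra_span B" "u \<in> Q.span B"
  shows "u ^ k \<in> Q.span B"
  using assms by (induction k) (auto simp: Q_algebra_span_def intro: Q_algebra_span_mult)

text \<open>\<open>P\<close> records a linear dependence among \<open>1, z, \<dots>, z\<^sup>N\<close>, which lie in a space spanned
  by \<open>N\<close> elements.\<close>
lemma rat_poly_root_if_powers_in_Q_span:
  assumes "finite B" "\<And>k. z ^ k \<in> Q.span B"
  obtains P :: "rat poly" where "P \<noteq> 0" "degree P \<le> card B" "poly (map_poly of_rat P) z = 0"
proof (cases "inj_on (\<lambda>k. z ^ k) {0..card B}")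
  case False
  then obtain i j where ij: "i \<le> card B" "j \<le> card B" "i \<noteq> j" "z ^ i = z ^ j"
    unfolding inj_on_def by auto
  define P :: "rat poly" where "P = monom 1 i - monom 1 j"
  have "map_poly of_rat P = (monom 1 i - monom 1 j :: complex poly)"
    by (intro poly_eqI) (simp add: P_def coeff_map_poly coeff_monom of_rat_diff)
  then have "poly (map_poly of_rat P) z = 0"
    using ij by (simp add: poly_monom)
  moreover have "P \<noteq> 0" "degree P \<le> card B"
    using ij by (auto simp: P_def monom_eq_iff' intro!: degree_le simp: coeff_monom)
  ultimately show ?thesis using that by blast
next
  case True
  define S where "S = (\<lambda>k. z ^ k) ` {0..card B}"
  have "card S = card B + 1"
    using True by (simp add: S_def card_image)
  moreover have "S \<subseteq> Q.span B"
    using assms(2) by (auto simp: S_def)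
  ultimately have "Q.dependent S"
    using Q.independent_span_bound[OF assms(1), of S] by auto
  then obtain u where u: "\<exists>v\<in>S. u v \<noteq> 0" "(\<Sum>v\<in>S. of_rat (u v) * v) = 0"
    using Q.dependent_finite[of S] by (auto simp: S_def)
  define P :: "rat poly" where "P = (\<Sum>k\<le>card B. monom (u (z ^ k)) k)"
  have coeff_P: "coeff P k = (if k \<le> card B then u (z ^ k) else 0)" for k
    by (simp add: P_def coeff_sum coeff_monom)
  have "map_poly of_rat P = (\<Sum>k\<le>card B. monom (of_rat (u (z ^ k)) :: complex) k)"
    by (intro poly_eqI) (simp add: coeff_map_poly coeff_P coeff_sum coeff_monom)
  then have "poly (map_poly of_rat P) z = (\<Sum>k\<le>card B. of_rat (u (z ^ k)) * z ^ k)"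
    by (simp add: poly_sum poly_monom)
  also have "\<dots> = (\<Sum>v\<in>S. of_rat (u v) * v)"
    unfolding S_def atLeast0AtMost by (subst sum.reindex) (use True in \<open>auto simp: atLeast0AtMost\<close>)
  finally have "poly (map_poly of_rat P) z = 0"
    using u(2) by simp
  moreover have "P \<noteq> 0"
    using u(1) by (auto simp: S_def poly_eq_iff coeff_P)
  moreover have "degree P \<le> card B"
    by (rule degree_le) (simp add: coeff_P)
  ultimately show ?thesis using that by blast
qed

lemma algebraic_monic_rat_poly:
  assumes "algebraic w"
  obtains p where "lead_coeff p = 1" "\<forall>i. coeff p i \<in> \<rat>" "poly p w = 0"
proof -
  obtain p0 where p0: "\<And>i. coeff p0 i \<in> \<rat>" "p0 \<noteq> 0" "poly p0 w = 0"
    using assms unfolding algebraic_altdef by blast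
  show ?thesis
    by (rule that[of "smult (inverse (lead_coeff p0)) p0"]) (use p0 in \<open>auto intro: Rats_mult\<close>)
qed

lemma power_degree_of_monic_root:
  fixes p :: "'a :: comm_ring_1 poly"
  assumes "lead_coeff p = 1" "poly p w = 0"
  shows "w ^ degree p = - (\<Sum>i<degree p. coeff p i * w ^ i)"
proof -
  have "0 = (\<Sum>i\<le>degree p. coeff p i * w ^ i)"
    using assms(2) unfolding poly_altdef by simp
  also have "\<dots> = (\<Sum>i<degree p. coeff p i * w ^ i) + w ^ degree p"
    using assms(1) by (simp add: lessThan_Suc_atMost[symmetric])
  finally show ?thesis
    by (simp add: eq_neg_iff_add_eq_0 add.commute)
qed

text \<open>Powers \<open>w\<^sup>k\<close> with \<open>k \<ge> deg p\<close> are reduced by the monic equation \<open>p(w) = 0\<close>.\<close>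
lemma Q_span_mult_root_power:
  assumes B: "Q_algebra_span B"
    and p: "lead_coeff p = 1" "\<And>i. coeff p i \<in> Q.span B" "poly p w = 0"
    and c: "c \<in> Q.span B"
  shows "c * w ^ k \<in> Q.span ((\<lambda>(b, i). b * w ^ i) ` (B \<times> {..<degree p}))"
  using c
proof (induction k arbitrary: c rule: less_induct)
  case (less k)
  define d where "d = degree p"
  define B' where "B' = (\<lambda>(b, i). b * w ^ i) ` (B \<times> {..<d})"
  have w_d: "w ^ d = - (\<Sum>i<d. coeff p i * w ^ i)"
    unfolding d_def using p(1,3) by (rule power_degree_of_monic_root)
  then have "d \<noteq> 0"
    by (cases d) simp_all
  show ?case
    unfolding d_def[symmetric] B'_def[symmetric]
  proof (cases "k < d")
    case True
    have "w ^ k * b \<in> Q.span B'" if "b \<in> B" for b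
      using that True by (intro Q.span_base) (force simp: B'_def mult.commute)
    then have "w ^ k * c \<in> Q.span B'"
      using less.prems by (rule Q_span_mult)
    then show "c * w ^ k \<in> Q.span B'"
      by (simp add: mult.commute)
  next
    case False
    have "c * w ^ k = c * w ^ (k - d) * w ^ d"
      using False by (simp add: power_add[symmetric])
    also have "\<dots> = - (\<Sum>i<d. (c * coeff p i) * w ^ (k - d + i))"
      by (simp add: w_d sum_distrib_left power_add algebra_simps)
    finally have eq: "c * w ^ k = - (\<Sum>i<d. (c * coeff p i) * w ^ (k - d + i))" .
    have "(c * coeff p i) * w ^ (k - d + i) \<in> Q.span B'" if "i < d" for i
      unfolding B'_def d_def
    proof (rule less.IH)
      show "k - degree p + i < k"
        using that False \<open>d \<noteq> 0\<close> by (simp add: d_def)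
      show "c * coeff p i \<in> Q.span B"
        by (rule Q_algebra_span_mult[OF B less.prems p(2)])
    qed
    then show "c * w ^ k \<in> Q.span B'"
      unfolding eq by (intro Q.span_neg Q.span_sum) simp
  qed
qed

lemma Q_algebra_span_adjoin:
  assumes B: "Q_algebra_span B" and "algebraic w"
  obtains B' where "Q_algebra_span B'" "Q.span B \<subseteq> Q.span B'" "w \<in> Q.span B'"
proof -
  obtain p where p: "lead_coeff p = 1" "\<forall>i. coeff p i \<in> \<rat>" "poly p w = 0"
    using algebraic_monic_rat_poly[OF \<open>algebraic w\<close>] by blast
  have coeff_p: "coeff p i \<in> Q.span B" for i
  proof -
    obtain r where "coeff p i = of_rat r"
      using p(2) by (auto elim: Rats_cases)
    then show ?thesis
      using B of_rat_in_Q_span by (simp add: Q_algebra_span_def)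
  qed
  define B' where "B' = (\<lambda>(b, i). b * w ^ i) ` (B \<times> {..<degree p})"
  have shifted: "c * w ^ k \<in> Q.span B'" if "c \<in> Q.span B" for c k
    unfolding B'_def using Q_span_mult_root_power[OF B p(1) coeff_p p(3) that] .
  have span_B: "Q.span B \<subseteq> Q.span B'"
    using shifted[of _ 0] by auto
  have "w \<in> Q.span B'"
    using shifted[of 1 1] B by (auto simp: Q_algebra_span_def)
  moreover have "Q_algebra_span B'"
    unfolding Q_algebra_span_def
  proof (intro conjI ballI)
    show "finite B'"
      using B by (simp add: B'_def Q_algebra_span_def)
    show "1 \<in> Q.span B'"
      using span_B B by (auto simp: Q_algebra_span_def)
    fix a b assume "a \<in> B'" "b \<in> B'"
    then obtain a0 i b0 j where "a0 \<in> B" "b0 \<in> B" "a = a0 * w ^ i" "b = b0 * w ^ j"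
      by (auto simp: B'_def)
    moreover have "a0 * b0 \<in> Q.span B"
      using B \<open>a0 \<in> B\<close> \<open>b0 \<in> B\<close> by (auto simp: Q_algebra_span_def)
    ultimately show "a * b \<in> Q.span B'"
      using shifted[of "a0 * b0" "i + j"] by (simp add: power_add algebra_simps)
  qed
  ultimately show ?thesis
    using that span_B by blast
qed

lemma Q_algebra_span_exists:
  assumes "finite A" "\<forall>a\<in>A. algebraic a"
  obtains B where "Q_algebra_span B" "A \<subseteq> Q.span B"
  using assms
proof (induction A arbitrary: thesis rule: finite_induct)
  case empty
  have "Q_algebra_span {1}"
    by (simp add: Q_algebra_span_def Q.span_base)
  then show ?case
    using empty by blast
next
  case (insert a A)
  then obtain B where B: "Q_algebra_span B" "A \<subseteq> Q.span B"
    by auto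
  then obtain B' where "Q_algebra_span B'" "Q.span B \<subseteq> Q.span B'" "a \<in> Q.span B'"
    using Q_algebra_span_adjoin insert.prems(2) by blast
  then show ?case
    using insert.prems(1) B(2) by blast
qed

lemma algebraic_if_in_Q_algebra_span:
  assumes "Q_algebra_span B" "z \<in> Q.span B"
  shows "algebraic z"
proof -
  have "finite B"
    using assms(1) by (simp add: Q_algebra_span_def)
  then obtain P :: "rat poly" where "P \<noteq> 0" "poly (map_poly of_rat P) z = 0"
    using rat_poly_root_if_powers_in_Q_span[OF _ Q_algebra_span_power[OF assms]] by blast
  then show ?thesis
    by (intro algebraicI'[of "map_poly of_rat P"]) (auto simp: coeff_map_poly map_poly_eq_0_iff)
qed

lemma algebraic_add: "algebraic x \<Longrightarrow> algebraic y \<Longrightarrow> algebraic (x + y :: complex)"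
  by (rule Q_algebra_span_exists[of "{x, y}"])
     (auto intro: algebraic_if_in_Q_algebra_span Q.span_add)

lemma algebraic_mult: "algebraic x \<Longrightarrow> algebraic y \<Longrightarrow> algebraic (x * y :: complex)"
  by (rule Q_algebra_span_exists[of "{x, y}"])
     (auto intro: algebraic_if_in_Q_algebra_span Q_algebra_span_mult)

lemma Qal_subfield: "is_subfield Qal"
  by (auto simp: is_subfield_def Qal_def intro: algebraic_add algebraic_mult)

section \<open>Subfields, polynomials over them and minimal polynomials\<close>

context
  fixes L :: "complex set"
  assumes L: "is_subfield L"
begin

lemma subfield_0: "0 \<in> L"
  and subfield_1: "1 \<in> L"
  and subfield_add: "a \<in> L \<Longrightarrow> b \<in> L \<Longrightarrow> a + b \<in> L"
  and subfield_mult: "a \<in> L \<Longrightarrow> b \<in> L \<Longrightarrow> a * b \<in> L"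
  and subfield_uminus: "a \<in> L \<Longrightarrow> - a \<in> L"
  and subfield_inverse: "a \<in> L \<Longrightarrow> inverse a \<in> L"
  using L by (auto simp: is_subfield_def)

lemma subfield_diff: "a \<in> L \<Longrightarrow> b \<in> L \<Longrightarrow> a - b \<in> L"
  using subfield_add subfield_uminus by (metis diff_conv_add_uminus)

lemma subfield_divide: "a \<in> L \<Longrightarrow> b \<in> L \<Longrightarrow> a / b \<in> L"
  using subfield_mult subfield_inverse by (metis divide_inverse)

lemma subfield_sum: "(\<And>i. i \<in> I \<Longrightarrow> f i \<in> L) \<Longrightarrow> sum f I \<in> L"
  by (induction I rule: infinite_finite_induct) (auto intro: subfield_0 subfield_add)

lemma subfield_power: "a \<in> L \<Longrightarrow> a ^ n \<in> L"
  by (induction n) (auto intro: subfield_1 subfield_mult)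

lemma subfield_of_nat: "of_nat n \<in> L"
  by (induction n) (auto intro: subfield_0 subfield_1 subfield_add)

lemma subfield_Ints: "a \<in> \<int> \<Longrightarrow> a \<in> L"
  by (elim Ints_cases) (metis of_int_of_nat subfield_of_nat subfield_uminus)

end

definition poly_over :: "complex set \<Rightarrow> complex poly \<Rightarrow> bool" where
  "poly_over L f \<longleftrightarrow> (\<forall>i. coeff f i \<in> L)"

lemma poly_over_mono: "poly_over L f \<Longrightarrow> L \<subseteq> L' \<Longrightarrow> poly_over L' f"
  by (auto simp: poly_over_def)

context
  fixes L :: "complex set"
  assumes L: "is_subfield L"
begin

lemma poly_over_pCons: "poly_over L (pCons a f) \<longleftrightarrow> a \<in> L \<and> poly_over L f"
  using subfield_0[OF L] by (auto simp: poly_over_def coeff_pCons split: nat.splits)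

lemma poly_over_0: "poly_over L 0"
  and poly_over_const: "a \<in> L \<Longrightarrow> poly_over L [:a:]"
  and poly_over_X: "poly_over L [:0, 1:]"
  using subfield_0[OF L] subfield_1[OF L] by (auto simp: poly_over_def coeff_pCons split: nat.splits)

lemma poly_over_Ints: "(\<And>i. coeff f i \<in> \<int>) \<Longrightarrow> poly_over L f"
  using subfield_Ints[OF L] by (auto simp: poly_over_def)

lemma poly_over_add: "poly_over L f \<Longrightarrow> poly_over L g \<Longrightarrow> poly_over L (f + g)"
  and poly_over_uminus: "poly_over L f \<Longrightarrow> poly_over L (- f)"
  and poly_over_diff: "poly_over L f \<Longrightarrow> poly_over L g \<Longrightarrow> poly_over L (f - g)"
  and poly_over_smult: "a \<in> L \<Longrightarrow> poly_over L f \<Longrightarrow> poly_over L (smult a f)"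
  by (simp_all add: poly_over_def subfield_add[OF L] subfield_uminus[OF L] subfield_diff[OF L]
      subfield_mult[OF L])

lemma poly_over_mult: "poly_over L f \<Longrightarrow> poly_over L g \<Longrightarrow> poly_over L (f * g)"
  unfolding poly_over_def coeff_mult by (auto intro!: subfield_sum[OF L] subfield_mult[OF L])

lemma poly_over_poly: "poly_over L f \<Longrightarrow> x \<in> L \<Longrightarrow> poly f x \<in> L"
  by (induction f) (auto simp: poly_over_pCons intro: subfield_0[OF L] subfield_add[OF L] subfield_mult[OF L])

lemma poly_over_pcompose: "poly_over L f \<Longrightarrow> poly_over L g \<Longrightarrow> poly_over L (pcompose f g)"
  by (induction f)
     (auto simp: poly_over_pCons pcompose_pCons intro: poly_over_add poly_over_mult poly_over_const)

lemma poly_over_div_mod: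
  assumes "poly_over L f" "poly_over L g"
  shows "poly_over L (f div g) \<and> poly_over L (f mod g)"
  using assms(1)
proof (induction f)
  case 0
  then show ?case by (simp add: poly_over_0)
next
  case (pCons a f)
  then have a: "a \<in> L" and IH: "poly_over L (f div g)" "poly_over L (f mod g)"
    by (auto simp: poly_over_pCons)
  define b where "b = coeff (pCons a (f mod g)) (degree g) / lead_coeff g"
  have b: "b \<in> L"
    unfolding b_def using a IH assms(2)
    by (intro subfield_divide[OF L]) (auto simp: poly_over_def coeff_pCons split: nat.splits)
  show ?case
  proof (cases "g = 0")
    case False
    have "pCons a f div g = pCons b (f div g)" "pCons a f mod g = pCons a (f mod g) - smult b g"
      using False by (simp_all add: div_pCons_eq mod_pCons_eq b_def)
    then show ?thesis
      using IH a b assms(2) by (simp add: poly_over_pCons poly_over_diff poly_over_smult)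
  qed (use pCons.prems in \<open>simp add: poly_over_0\<close>)
qed

end

lemma coeff_linear_power_pred: "coeff ([:a, 1:] ^ Suc n) n = of_nat (Suc n) * (a :: complex)"
proof (induction n)
  case (Suc n)
  have "coeff ([:a, 1:] ^ Suc (Suc n)) (Suc n)
      = a * coeff ([:a, 1:] ^ Suc n) (Suc n) + coeff ([:a, 1:] ^ Suc n) n"
    by (simp add: power_Suc[of _ "Suc n"])
  also have "\<dots> = a + of_nat (Suc n) * a"
    using Suc coeff_linear_power[of a "Suc n"] by simp
  finally show ?case
    by (simp add: algebra_simps)
qed simp

definition is_min_poly :: "complex set \<Rightarrow> complex \<Rightarrow> complex poly \<Rightarrow> bool" where
  "is_min_poly L x p \<longleftrightarrow> poly_over L p \<and> lead_coeff p = 1 \<and> poly p x = 0 \<and>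
     (\<forall>q. poly_over L q \<and> q \<noteq> 0 \<and> poly q x = 0 \<longrightarrow> degree p \<le> degree q)"

definition min_poly :: "complex set \<Rightarrow> complex \<Rightarrow> complex poly" where
  "min_poly L x = (SOME p. is_min_poly L x p)"

context
  fixes L :: "complex set" and x :: complex
  assumes L: "is_subfield L" and x: "algebraic x"
begin

lemma is_min_poly_min_poly: "is_min_poly L x (min_poly L x)"
proof -
  define P where "P = (\<lambda>q. poly_over L q \<and> q \<noteq> 0 \<and> poly q x = 0)"
  obtain q0 where "P q0"
    using x poly_over_Ints[OF L] by (auto simp: P_def algebraic_def)
  obtain q where q: "P q" and q_min: "\<And>r. P r \<Longrightarrow> degree q \<le> degree r"
    using ex_has_least_nat[of P q0 degree] \<open>P q0\<close> by blast
  define p where "p = smult (inverse (lead_coeff q)) q"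
  have "poly_over L p"
    using q unfolding p_def P_def
    by (intro poly_over_smult[OF L] subfield_inverse[OF L]) (auto simp: poly_over_def)
  moreover have "lead_coeff p = 1" "poly p x = 0" "degree p = degree q"
    using q by (simp_all add: p_def P_def)
  ultimately have "is_min_poly L x p"
    using q_min by (auto simp: is_min_poly_def P_def)
  then show ?thesis
    unfolding min_poly_def by (rule someI)
qed

lemma min_poly_over: "poly_over L (min_poly L x)"
  and min_poly_monic: "lead_coeff (min_poly L x) = 1"
  and min_poly_root: "poly (min_poly L x) x = 0"
  and min_poly_minimal: "poly_over L q \<Longrightarrow> q \<noteq> 0 \<Longrightarrow> poly q x = 0 \<Longrightarrow> degree (min_poly L x) \<le> degree q"
  using is_min_poly_min_poly by (auto simp: is_min_poly_def)

lemma degree_min_poly_pos: "degree (min_poly L x) > 0"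
proof (rule ccontr)
  assume "\<not> degree (min_poly L x) > 0"
  then have "min_poly L x = [:1:]"
    using min_poly_monic by (metis degree_0_id neq0_conv)
  then show False
    using min_poly_root by simp
qed

lemma min_poly_dvd:
  assumes "poly_over L q" "poly q x = 0"
  obtains h where "poly_over L h" "q = min_poly L x * h"
proof -
  define M where "M = min_poly L x"
  have M: "poly_over L M" "M \<noteq> 0"
    using min_poly_over min_poly_monic by (auto simp: M_def)
  have r: "poly_over L (q mod M)" "poly_over L (q div M)"
    using poly_over_div_mod[OF L assms(1) M(1)] by auto
  have "poly q x = poly (q div M * M + q mod M) x"
    by simp
  then have "poly q x = poly (q div M) x * poly M x + poly (q mod M) x"
    by (simp only: poly_add poly_mult)
  then have root_mod: "poly (q mod M) x = 0"
    using assms(2) min_poly_root by (simp add: M_def)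
  have "q mod M = 0"
  proof (rule ccontr)
    assume nz: "q mod M \<noteq> 0"
    have "degree (q mod M) < degree M"
      using degree_mod_less'[OF M(2) nz] .
    moreover have "degree M \<le> degree (q mod M)"
      using min_poly_minimal[OF r(1) nz root_mod] by (simp add: M_def)
    ultimately show False
      by simp
  qed
  then have "q = M * (q div M)"
    using div_mult_mod_eq[of q M] by (simp add: mult.commute)
  then show ?thesis
    using that r(2) by (simp add: M_def)
qed

text \<open>Characteristic 0: if \<open>x\<close> were the only root, the minimal polynomial would be
  \<open>(X - x)\<^sup>d\<close>, whose coefficient of \<open>X\<^sup>d\<^sup>-\<^sup>1\<close> is \<open>-d x\<close>.\<close>
lemma min_poly_other_root:
  assumes "x \<notin> L"
  obtains x' where "poly (min_poly L x) x' = 0" "x' \<noteq> x"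
proof -
  define M where "M = min_poly L x"
  have "\<exists>x'. poly M x' = 0 \<and> x' \<noteq> x"
  proof (rule ccontr)
    assume "\<not> ?thesis"
    then have only_x: "z = x" if "poly M z = 0" for z
      using that by blast
    obtain root where root: "smult (lead_coeff M) (\<Prod>i<degree M. [:-root i, 1:]) = M"
      using complex_poly_decompose' by blast
    have "root i = x" if "i < degree M" for i
    proof (rule only_x)
      have "poly (\<Prod>i<degree M. [:-root i, 1:]) (root i) = 0"
        using that by (auto simp: poly_prod prod_zero_iff)
      then show "poly M (root i) = 0"
        by (subst root[symmetric]) simp
    qed
    then have "M = [:-x, 1:] ^ degree M"
      using root min_poly_monic by (simp add: M_def)
    moreover obtain n where n: "degree M = Suc n"
      using degree_min_poly_pos by (auto simp: M_def gr0_conv_Suc)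
    ultimately have coeff_M: "coeff M n = - (of_nat (Suc n) * x)"
      using coeff_linear_power_pred[of "-x" n] by simp
    have "coeff M n \<in> L"
      using min_poly_over by (simp add: M_def poly_over_def)
    then have "- (coeff M n / of_nat (Suc n)) \<in> L"
      by (intro subfield_uminus[OF L] subfield_divide[OF L] subfield_of_nat[OF L])
    moreover have "- (coeff M n / of_nat (Suc n)) = x"
      using coeff_M by (simp del: of_nat_Suc)
    ultimately show False
      using assms by simp
  qed
  then show ?thesis
    using that by (auto simp: M_def)
qed

end

section \<open>Field homomorphisms and simple extensions\<close>

definition field_hom_on :: "complex set \<Rightarrow> (complex \<Rightarrow> complex) \<Rightarrow> bool" where
  "field_hom_on L \<tau> \<longleftrightarrow> \<tau> 1 = 1 \<and>
     (\<forall>a\<in>L. \<forall>b\<in>L. \<tau> (a + b) = \<tau> a + \<tau> b \<and> \<tau> (a * b) = \<tau> a * \<tau> b)"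

context
  fixes L :: "complex set" and \<tau> :: "complex \<Rightarrow> complex"
  assumes L: "is_subfield L" and \<tau>: "field_hom_on L \<tau>"
begin

lemma hom_1: "\<tau> 1 = 1"
  and hom_add: "a \<in> L \<Longrightarrow> b \<in> L \<Longrightarrow> \<tau> (a + b) = \<tau> a + \<tau> b"
  and hom_mult: "a \<in> L \<Longrightarrow> b \<in> L \<Longrightarrow> \<tau> (a * b) = \<tau> a * \<tau> b"
  using \<tau> by (simp_all add: field_hom_on_def)

lemma hom_0: "\<tau> 0 = 0"
  using hom_add[OF subfield_0[OF L] subfield_0[OF L]] by simp

lemma hom_uminus:
  assumes "a \<in> L"
  shows "\<tau> (- a) = - \<tau> a"
proof -
  have "\<tau> a + \<tau> (- a) = 0"
    using hom_add[OF assms subfield_uminus[OF L assms]] hom_0 by simp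
  then show ?thesis
    by (simp add: add_eq_0_iff)
qed

lemma hom_diff: "a \<in> L \<Longrightarrow> b \<in> L \<Longrightarrow> \<tau> (a - b) = \<tau> a - \<tau> b"
  using hom_add[of a "- b"] hom_uminus[of b] subfield_uminus[OF L, of b] by simp

lemma hom_inverse: "a \<in> L \<Longrightarrow> \<tau> (inverse a) = inverse (\<tau> a)"
proof (cases "a = 0")
  case False
  assume "a \<in> L"
  then have "\<tau> a * \<tau> (inverse a) = 1"
    using hom_mult[of a "inverse a"] subfield_inverse[OF L] False hom_1 by simp
  then show ?thesis
    by (simp add: inverse_unique)
qed (simp add: hom_0)

lemma hom_eq_iff: "a \<in> L \<Longrightarrow> b \<in> L \<Longrightarrow> \<tau> a = \<tau> b \<longleftrightarrow> a = b"
proof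
  assume ab: "a \<in> L" "b \<in> L" "\<tau> a = \<tau> b"
  show "a = b"
  proof (rule ccontr)
    assume "a \<noteq> b"
    then have "\<tau> ((a - b) * inverse (a - b)) = 1"
      using hom_1 by simp
    then show False
      using ab hom_mult hom_diff subfield_diff[OF L] subfield_inverse[OF L] by simp
  qed
qed simp

lemma hom_sum: "(\<And>i. i \<in> I \<Longrightarrow> f i \<in> L) \<Longrightarrow> \<tau> (sum f I) = (\<Sum>i\<in>I. \<tau> (f i))"
  by (induction I rule: infinite_finite_induct) (auto simp: hom_0 hom_add subfield_sum[OF L])

lemma hom_power: "a \<in> L \<Longrightarrow> \<tau> (a ^ n) = \<tau> a ^ n"
  by (induction n) (auto simp: hom_1 hom_mult subfield_power[OF L])

lemma hom_Ints: "a \<in> \<int> \<Longrightarrow> \<tau> a = a"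
proof -
  have "\<tau> (of_nat n) = of_nat n" for n
    by (induction n) (auto simp: hom_0 hom_1 hom_add subfield_of_nat[OF L] subfield_1[OF L])
  then show "a \<in> \<int> \<Longrightarrow> \<tau> a = a"
    by (elim Ints_cases) (metis of_int_of_nat hom_uminus subfield_of_nat[OF L])
qed

lemma coeff_map_hom: "coeff (map_poly \<tau> f) i = \<tau> (coeff f i)"
  by (simp add: coeff_map_poly hom_0)

lemma map_hom_add: "poly_over L f \<Longrightarrow> poly_over L g \<Longrightarrow> map_poly \<tau> (f + g) = map_poly \<tau> f + map_poly \<tau> g"
  and map_hom_diff: "poly_over L f \<Longrightarrow> poly_over L g \<Longrightarrow> map_poly \<tau> (f - g) = map_poly \<tau> f - map_poly \<tau> g"
  by (auto intro!: poly_eqI simp: coeff_map_hom hom_add hom_diff poly_over_def)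

lemma map_hom_mult: "poly_over L f \<Longrightarrow> poly_over L g \<Longrightarrow> map_poly \<tau> (f * g) = map_poly \<tau> f * map_poly \<tau> g"
  by (intro poly_eqI)
     (simp add: coeff_map_hom coeff_mult hom_sum hom_mult subfield_mult[OF L] poly_over_def)

lemma poly_map_hom: "poly_over L f \<Longrightarrow> a \<in> L \<Longrightarrow> poly (map_poly \<tau> f) (\<tau> a) = \<tau> (poly f a)"
  by (induction f)
     (auto simp: map_poly_pCons hom_0 hom_add hom_mult poly_over_pCons[OF L]
       subfield_mult[OF L] poly_over_poly[OF L])

lemma map_hom_monic:
  assumes "lead_coeff f = 1"
  shows "degree (map_poly \<tau> f) = degree f" "lead_coeff (map_poly \<tau> f) = 1"
proof -
  have top: "coeff (map_poly \<tau> f) (degree f) = 1"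
    using assms by (simp add: coeff_map_hom hom_1)
  moreover have "degree (map_poly \<tau> f) \<le> degree f"
    by (rule degree_le) (simp add: coeff_map_hom coeff_eq_0 hom_0)
  ultimately show "degree (map_poly \<tau> f) = degree f"
    by (metis le_antisym le_degree one_neq_zero)
  then show "lead_coeff (map_poly \<tau> f) = 1"
    using top by simp
qed

lemma hom_algebraic:
  assumes "a \<in> L" "algebraic a"
  shows "algebraic (\<tau> a)"
proof -
  obtain P where P: "\<And>i. coeff P i \<in> \<int>" "P \<noteq> 0" "poly P a = 0"
    using assms(2) by (rule algebraicE) blast
  have "map_poly \<tau> P = P"
    by (intro poly_eqI) (simp add: coeff_map_hom hom_Ints P(1))
  then have "poly P (\<tau> a) = \<tau> (poly P a)"
    using poly_map_hom[OF poly_over_Ints[OF L P(1)] assms(1)] by simp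
  then show ?thesis
    using P by (intro algebraicI[of P]) (simp_all add: hom_0)
qed

end

definition adjoin :: "complex set \<Rightarrow> complex \<Rightarrow> complex set" where
  "adjoin L x = {poly f x | f. poly_over L f}"

context
  fixes L :: "complex set" and x :: complex
  assumes L: "is_subfield L" and L_Qal: "L \<subseteq> Qal" and x: "x \<in> Qal"
begin

lemma subset_adjoin: "L \<subseteq> adjoin L x"
  using poly_over_const[OF L] by (force simp: adjoin_def)

lemma in_adjoin: "x \<in> adjoin L x"
  using poly_over_X[OF L] by (force simp: adjoin_def)

lemma adjoin_subset_Qal: "adjoin L x \<subseteq> Qal"
  using poly_over_poly[OF Qal_subfield] poly_over_mono L_Qal x by (auto simp: adjoin_def)

text \<open>The inverse of \<open>a \<noteq> 0\<close> is read off its minimal polynomial \<open>c + X * N\<close>, where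
  \<open>c \<noteq> 0\<close> by minimality: \<open>a\<inverse> = - N(a) / c\<close>.\<close>
lemma inverse_in_adjoin:
  assumes "a \<in> adjoin L x"
  shows "inverse a \<in> adjoin L x"
proof (cases "a = 0")
  case False
  obtain f where f: "poly_over L f" "a = poly f x"
    using assms by (auto simp: adjoin_def)
  have alg: "algebraic a"
    using assms adjoin_subset_Qal by (auto simp: Qal_def)
  obtain c N where cN: "min_poly L a = pCons c N"
    by (cases "min_poly L a") auto
  have c: "c \<in> L" and N: "poly_over L N"
    using min_poly_over[OF L alg] cN by (auto simp: poly_over_pCons[OF L])
  have root: "c + a * poly N a = 0"
    using min_poly_root[OF L alg] cN by simp
  have "c \<noteq> 0"
  proof
    assume "c = 0"
    then have "poly N a = 0" "N \<noteq> 0"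
      using root False min_poly_monic[OF L alg] cN by auto
    then have "degree (min_poly L a) \<le> degree N"
      using min_poly_minimal[OF L alg N] by blast
    then show False
      using cN \<open>N \<noteq> 0\<close> by simp
  qed
  then have inv: "inverse a = - poly N a / c"
    using root by (intro inverse_unique) (simp add: field_simps add_eq_0_iff)
  have "poly_over L (smult (- inverse c) (pcompose N f))"
    using c N f(1) by (intro poly_over_smult[OF L] poly_over_pcompose[OF L] subfield_uminus[OF L]
        subfield_inverse[OF L])
  moreover have "poly (smult (- inverse c) (pcompose N f)) x = inverse a"
    by (simp add: poly_pcompose f(2)[symmetric] inv divide_inverse)
  ultimately show ?thesis
    unfolding adjoin_def by force
qed (use subset_adjoin subfield_0[OF L] in auto)

lemma adjoin_subfield: "is_subfield (adjoin L x)"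
  unfolding is_subfield_def
proof (intro conjI ballI)
  show "0 \<in> adjoin L x" "1 \<in> adjoin L x"
    using subset_adjoin subfield_0[OF L] subfield_1[OF L] by auto
next
  fix a b assume "a \<in> adjoin L x" "b \<in> adjoin L x"
  then obtain f g where fg: "poly_over L f" "a = poly f x" "poly_over L g" "b = poly g x"
    by (auto simp: adjoin_def)
  show "a + b \<in> adjoin L x"
    using fg unfolding adjoin_def by (auto intro!: exI[of _ "f + g"] poly_over_add[OF L])
  show "a * b \<in> adjoin L x"
    using fg unfolding adjoin_def by (auto intro!: exI[of _ "f * g"] poly_over_mult[OF L])
next
  fix a assume a: "a \<in> adjoin L x"
  then obtain f where "poly_over L f" "a = poly f x"
    by (auto simp: adjoin_def)
  then show "- a \<in> adjoin L x"
    unfolding adjoin_def by (auto intro!: exI[of _ "- f"] poly_over_uminus[OF L])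
  show "inverse a \<in> adjoin L x"
    using a by (rule inverse_in_adjoin)
qed

end

text \<open>Sending \<open>x\<close> to a root \<open>y\<close> of the conjugated minimal polynomial is well defined on
  \<open>L[x]\<close>, because two representations \<open>f(x) = g(x)\<close> differ by a multiple of that
  minimal polynomial.\<close>
lemma poly_map_hom_conjugate_root_eq:
  assumes L: "is_subfield L" and \<tau>: "field_hom_on L \<tau>" and x: "algebraic x"
    and y: "poly (map_poly \<tau> (min_poly L x)) y = 0"
    and f: "poly_over L f" and g: "poly_over L g" and fg: "poly f x = poly g x"
  shows "poly (map_poly \<tau> f) y = poly (map_poly \<tau> g) y"
proof -
  obtain q where q: "poly_over L q" "f - g = min_poly L x * q"
    using min_poly_dvd[OF L x poly_over_diff[OF L f g]] fg by auto
  have "map_poly \<tau> f - map_poly \<tau> g = map_poly \<tau> (min_poly L x) * map_poly \<tau> q"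
    using map_hom_diff[OF L \<tau> f g] map_hom_mult[OF L \<tau> min_poly_over[OF L x] q(1)] q(2) by simp
  then have "poly (map_poly \<tau> f) y - poly (map_poly \<tau> g) y = 0"
    using y by (metis poly_diff poly_mult mult_zero_left)
  then show ?thesis
    by simp
qed

lemma field_hom_on_adjoin_extend:
  assumes L: "is_subfield L" and \<tau>: "field_hom_on L \<tau>"
    and x: "algebraic x" and y: "poly (map_poly \<tau> (min_poly L x)) y = 0"
  obtains \<tau>' where "field_hom_on (adjoin L x) \<tau>'" "\<forall>a\<in>L. \<tau>' a = \<tau> a" "\<tau>' x = y"
proof -
  note well_defined = poly_map_hom_conjugate_root_eq[OF L \<tau> x y]
  define \<tau>' where "\<tau>' z = (SOME w. \<exists>f. poly_over L f \<and> z = poly f x \<and> w = poly (map_poly \<tau> f) y)"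
    for z
  have \<tau>'_poly: "\<tau>' (poly f x) = poly (map_poly \<tau> f) y" if f: "poly_over L f" for f
  proof -
    have "\<exists>w g. poly_over L g \<and> poly f x = poly g x \<and> w = poly (map_poly \<tau> g) y"
      using f by blast
    from someI_ex[OF this] obtain g where "poly_over L g" "poly f x = poly g x"
      "\<tau>' (poly f x) = poly (map_poly \<tau> g) y"
      unfolding \<tau>'_def by blast
    then show ?thesis
      using well_defined[OF f] by simp
  qed
  have "field_hom_on (adjoin L x) \<tau>'"
    unfolding field_hom_on_def
  proof (intro conjI ballI)
    show "\<tau>' 1 = 1"
      using \<tau>'_poly[OF poly_over_const[OF L subfield_1[OF L]]] hom_1[OF L \<tau>]
      by (simp add: map_poly_pCons hom_0[OF L \<tau>])
  next
    fix a b assume "a \<in> adjoin L x" "b \<in> adjoin L x"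
    then obtain f g where f: "poly_over L f" "a = poly f x" and g: "poly_over L g" "b = poly g x"
      by (auto simp: adjoin_def)
    show "\<tau>' (a + b) = \<tau>' a + \<tau>' b"
      using \<tau>'_poly[OF poly_over_add[OF L f(1) g(1)]] \<tau>'_poly f g
      by (simp add: map_hom_add[OF L \<tau>])
    show "\<tau>' (a * b) = \<tau>' a * \<tau>' b"
      using \<tau>'_poly[OF poly_over_mult[OF L f(1) g(1)]] \<tau>'_poly f g
      by (simp add: map_hom_mult[OF L \<tau>])
  qed
  moreover have "\<tau>' a = \<tau> a" if "a \<in> L" for a
    using \<tau>'_poly[OF poly_over_const[OF L that]] by (simp add: map_poly_pCons hom_0[OF L \<tau>])
  moreover have "\<tau>' x = y"
    using \<tau>'_poly[OF poly_over_X[OF L]] by (simp add: map_poly_pCons hom_0[OF L \<tau>] hom_1[OF L \<tau>])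
  ultimately show ?thesis
    using that by blast
qed

section \<open>Automorphisms of the algebraic numbers\<close>

lemma gal_aut_field_hom:
  assumes "gal_aut \<sigma>"
  shows "field_hom_on Qal \<sigma>"
proof -
  have add: "\<And>a b. a \<in> Qal \<Longrightarrow> b \<in> Qal \<Longrightarrow> \<sigma> (a + b) = \<sigma> a + \<sigma> b"
    and mult: "\<And>a b. a \<in> Qal \<Longrightarrow> b \<in> Qal \<Longrightarrow> \<sigma> (a * b) = \<sigma> a * \<sigma> b"
    and inj: "inj_on \<sigma> Qal"
    using assms unfolding gal_aut_def bij_betw_def by blast+
  have Q0: "0 \<in> Qal" and Q1: "1 \<in> Qal"
    using subfield_0[OF Qal_subfield] subfield_1[OF Qal_subfield] .
  have "\<sigma> 0 = 0"
    using add[OF Q0 Q0] by simp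
  then have "\<sigma> 1 \<noteq> 0"
    using inj_on_contraD[OF inj one_neq_zero Q1 Q0] by simp
  moreover have "\<sigma> 1 * \<sigma> 1 = \<sigma> 1"
    using mult[OF Q1 Q1] by simp
  ultimately have "\<sigma> 1 = 1"
    by simp
  then show ?thesis
    using add mult by (simp add: field_hom_on_def)
qed

text \<open>Surjectivity: \<open>\<sigma>\<close> maps the finite set of roots of an integer polynomial injectively
  into itself.\<close>
lemma field_hom_on_Qal_gal_aut:
  assumes \<sigma>: "field_hom_on Qal \<sigma>"
  shows "gal_aut \<sigma>"
proof -
  note hom = Qal_subfield \<sigma>
  have inj: "inj_on \<sigma> Qal"
    using hom_eq_iff[OF hom] by (auto simp: inj_on_def)
  have into: "\<sigma> ` Qal \<subseteq> Qal"
    using hom_algebraic[OF hom] by (auto simp: Qal_def)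
  have onto: "y \<in> \<sigma> ` Qal" if "y \<in> Qal" for y
  proof -
    have "algebraic y"
      using \<open>y \<in> Qal\<close> by (simp add: Qal_def)
    then obtain P where P: "\<And>i. coeff P i \<in> \<int>" "P \<noteq> 0" "poly P y = 0"
      by (rule algebraicE) blast
    define Z where "Z = {z. poly P z = 0}"
    have Z: "finite Z" "Z \<subseteq> Qal"
      using poly_roots_finite[OF P(2)] algebraicI[OF P(1,2)] by (auto simp: Z_def Qal_def)
    have "map_poly \<sigma> P = P"
      by (intro poly_eqI) (simp add: coeff_map_hom[OF hom] hom_Ints[OF hom] P(1))
    then have "\<sigma> z \<in> Z" if "z \<in> Z" for z
      using poly_map_hom[OF hom poly_over_Ints[OF Qal_subfield P(1)]] that Z(2) hom_0[OF hom]
      by (auto simp: Z_def)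
    then have "\<sigma> ` Z = Z"
      using endo_inj_surj[OF Z(1)] inj_on_subset[OF inj Z(2)] by blast
    then show ?thesis
      using Z(2) P(3) by (force simp: Z_def)
  qed
  have "\<sigma> ` Qal = Qal"
    using into onto by blast
  then show ?thesis
    using inj hom_add[OF hom] hom_mult[OF hom] by (simp add: gal_aut_def bij_betw_def)
qed

definition graph_fun :: "('a \<times> 'b) set \<Rightarrow> 'a \<Rightarrow> 'b" where
  "graph_fun G z = (THE w. (z, w) \<in> G)"

lemma graph_fun_eq: "single_valued G \<Longrightarrow> (z, w) \<in> G \<Longrightarrow> graph_fun G z = w"
  unfolding graph_fun_def by (auto simp: single_valued_def)

text \<open>Working with graphs makes the union of a chain again such a
  graph.\<close>
definition hom_graph_ext :: "(complex \<times> complex) set \<Rightarrow> (complex \<times> complex) set \<Rightarrow> bool" where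
  "hom_graph_ext G0 G \<longleftrightarrow> G0 \<subseteq> G \<and> single_valued G \<and> (1, 1) \<in> G \<and>
     is_subfield (Domain G) \<and> Domain G \<subseteq> Qal \<and>
     (\<forall>a b c d. (a, b) \<in> G \<longrightarrow> (c, d) \<in> G \<longrightarrow> (a + c, b + d) \<in> G \<and> (a * c, b * d) \<in> G)"

lemma hom_graph_ext_D:
  assumes "hom_graph_ext G0 G"
  shows "G0 \<subseteq> G" "single_valued G" "(1, 1) \<in> G" "is_subfield (Domain G)" "Domain G \<subseteq> Qal"
    and "(a, b) \<in> G \<Longrightarrow> (c, d) \<in> G \<Longrightarrow> (a + c, b + d) \<in> G \<and> (a * c, b * d) \<in> G"
  using assms unfolding hom_graph_ext_def by blast+

lemma hom_graph_ext_graph: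
  assumes "is_subfield E" "E \<subseteq> Qal" "field_hom_on E \<tau>" "G0 \<subseteq> {(z, \<tau> z) | z. z \<in> E}"
  shows "hom_graph_ext G0 {(z, \<tau> z) | z. z \<in> E}"
proof -
  have dom: "Domain {(z, \<tau> z) | z. z \<in> E} = E"
    by auto
  show ?thesis
    unfolding hom_graph_ext_def
  proof (intro conjI)
    show "single_valued {(z, \<tau> z) | z. z \<in> E}"
      by (auto simp: single_valued_def)
    show "(1, 1) \<in> {(z, \<tau> z) | z. z \<in> E}"
      using hom_1[OF assms(1,3)] subfield_1[OF assms(1)] by auto
    show "\<forall>a b c d. (a, b) \<in> {(z, \<tau> z) | z. z \<in> E} \<longrightarrow> (c, d) \<in> {(z, \<tau> z) | z. z \<in> E} \<longrightarrow>
        (a + c, b + d) \<in> {(z, \<tau> z) | z. z \<in> E} \<and> (a * c, b * d) \<in> {(z, \<tau> z) | z. z \<in> E}"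
      using hom_add[OF assms(1,3)] hom_mult[OF assms(1,3)] subfield_add[OF assms(1)]
        subfield_mult[OF assms(1)]
      by fastforce
  qed (use assms dom in simp_all)
qed

lemma hom_graph_ext_field_hom:
  assumes "hom_graph_ext G0 G"
  shows "field_hom_on (Domain G) (graph_fun G)"
proof -
  have sv: "single_valued G"
    by (rule hom_graph_ext_D(2)[OF assms])
  have in_G: "(a, graph_fun G a) \<in> G" if "a \<in> Domain G" for a
    using that graph_fun_eq[OF sv] by auto
  show ?thesis
    unfolding field_hom_on_def
  proof (intro conjI ballI)
    show "graph_fun G 1 = 1"
      using hom_graph_ext_D(3)[OF assms] graph_fun_eq[OF sv] by simp
    fix a b assume "a \<in> Domain G" "b \<in> Domain G"
    then have "(a + b, graph_fun G a + graph_fun G b) \<in> G"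
      "(a * b, graph_fun G a * graph_fun G b) \<in> G"
      using hom_graph_ext_D(6)[OF assms in_G in_G] by blast+
    then show "graph_fun G (a + b) = graph_fun G a + graph_fun G b"
      "graph_fun G (a * b) = graph_fun G a * graph_fun G b"
      using graph_fun_eq[OF sv] by simp_all
  qed
qed

lemma subfield_Union_chain:
  assumes chain: "\<And>F G. F \<in> S \<Longrightarrow> G \<in> S \<Longrightarrow> F \<subseteq> G \<or> G \<subseteq> F"
    and "S \<noteq> {}" and subfields: "\<And>F. F \<in> S \<Longrightarrow> is_subfield F"
  shows "is_subfield (\<Union>S)"
  unfolding is_subfield_def
proof (intro conjI ballI)
  obtain F where "F \<in> S"
    using \<open>S \<noteq> {}\<close> by blast
  then show "0 \<in> \<Union>S" "1 \<in> \<Union>S"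
    using subfield_0 subfield_1 subfields by blast+
next
  fix a b assume "a \<in> \<Union>S" "b \<in> \<Union>S"
  then obtain F G where FG: "F \<in> S" "G \<in> S" "a \<in> F" "b \<in> G"
    by blast
  then have "\<exists>H\<in>S. a \<in> H \<and> b \<in> H"
    using chain[OF FG(1,2)] by blast
  then obtain F where "F \<in> S" "a \<in> F" "b \<in> F"
    by blast
  then show "a + b \<in> \<Union>S" "a * b \<in> \<Union>S"
    using subfield_add subfield_mult subfields by blast+
next
  fix a assume "a \<in> \<Union>S"
  then obtain F where "F \<in> S" "a \<in> F"
    by blast
  then show "- a \<in> \<Union>S" "inverse a \<in> \<Union>S"
    using subfield_uminus subfield_inverse subfields by blast+
qed

lemma chains_Union_common:
  assumes C: "C \<in> chains A" and p: "p \<in> \<Union>C" and q: "q \<in> \<Union>C"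
  obtains G where "G \<in> C" "p \<in> G" "q \<in> G"
proof -
  obtain P Q where "P \<in> C" "p \<in> P" "Q \<in> C" "q \<in> Q"
    using p q by blast
  moreover have "P \<subseteq> Q \<or> Q \<subseteq> P"
    using C \<open>P \<in> C\<close> \<open>Q \<in> C\<close> by (auto simp: chains_def chain_subset_def)
  ultimately show ?thesis
    using that by blast
qed

lemma single_valued_Union_chain:
  assumes C: "C \<in> chains A" and sv: "\<And>G. G \<in> C \<Longrightarrow> single_valued G"
  shows "single_valued (\<Union>C)"
  unfolding single_valued_def
proof (intro allI impI)
  fix a b c assume "(a, b) \<in> \<Union>C" "(a, c) \<in> \<Union>C"
  then obtain G where "G \<in> C" "(a, b) \<in> G" "(a, c) \<in> G"
    using chains_Union_common[OF C] by metis
  then show "b = c"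
    using sv[of G] by (auto simp: single_valued_def)
qed

lemma hom_graph_ext_Union_chain:
  assumes C: "C \<in> chains {G. hom_graph_ext G0 G}" and "C \<noteq> {}"
  shows "hom_graph_ext G0 (\<Union>C)"
proof -
  have ext: "hom_graph_ext G0 G" if "G \<in> C" for G
    using C that by (auto simp: chains_def)
  obtain G1 where "G1 \<in> C"
    using \<open>C \<noteq> {}\<close> by blast
  have sv: "single_valued (\<Union>C)"
    using single_valued_Union_chain[OF C] hom_graph_ext_D(2)[OF ext] .
  have closed: "(a + c, b + d) \<in> \<Union>C \<and> (a * c, b * d) \<in> \<Union>C"
    if ab: "(a, b) \<in> \<Union>C" and cd: "(c, d) \<in> \<Union>C" for a b c d
  proof -
    obtain G where G: "G \<in> C" "(a, b) \<in> G" "(c, d) \<in> G"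
      using chains_Union_common[OF C ab cd] .
    then have "(a + c, b + d) \<in> G" "(a * c, b * d) \<in> G"
      using hom_graph_ext_D(6)[OF ext[OF G(1)] G(2) G(3)] by simp_all
    then show ?thesis
      using G(1) by blast
  qed
  have dom_chain: "Domain P \<subseteq> Domain Q \<or> Domain Q \<subseteq> Domain P" if "P \<in> C" "Q \<in> C" for P Q
  proof -
    have "P \<subseteq> Q \<or> Q \<subseteq> P"
      using C that by (auto simp: chains_def chain_subset_def)
    then show ?thesis
      using Domain_mono by blast
  qed
  have subfield: "is_subfield (Domain (\<Union>C))"
    unfolding Domain_Union
  proof (rule subfield_Union_chain)
    show "F \<subseteq> G \<or> G \<subseteq> F" if "F \<in> Domain ` C" "G \<in> Domain ` C" for F G
      using that dom_chain by blast
    show "Domain ` C \<noteq> {}"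
      using \<open>G1 \<in> C\<close> by blast
    show "is_subfield F" if "F \<in> Domain ` C" for F
      using that hom_graph_ext_D(4)[OF ext] by blast
  qed
  have base: "G0 \<subseteq> \<Union>C" "(1, 1) \<in> \<Union>C"
    using hom_graph_ext_D(1,3)[OF ext[OF \<open>G1 \<in> C\<close>]] \<open>G1 \<in> C\<close> by blast+
  have dom: "Domain (\<Union>C) \<subseteq> Qal"
    unfolding Domain_Union using hom_graph_ext_D(5)[OF ext] by blast
  have "\<forall>a b c d. (a, b) \<in> \<Union>C \<longrightarrow> (c, d) \<in> \<Union>C \<longrightarrow>
      (a + c, b + d) \<in> \<Union>C \<and> (a * c, b * d) \<in> \<Union>C"
    by (intro allI impI closed)
  then show ?thesis
    unfolding hom_graph_ext_def by (intro conjI base sv subfield dom)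
qed

lemma conjugate_min_poly_root:
  assumes L: "is_subfield L" and \<sigma>: "field_hom_on L \<sigma>" and x: "algebraic x"
  obtains y where "poly (map_poly \<sigma> (min_poly L x)) y = 0"
proof -
  have "degree (map_poly \<sigma> (min_poly L x)) \<noteq> 0"
    using map_hom_monic[OF L \<sigma> min_poly_monic[OF L x]] degree_min_poly_pos[OF L x] by simp
  then have "\<not> constant (poly (map_poly \<sigma> (min_poly L x)))"
    by (simp add: constant_degree)
  then show ?thesis
    using fundamental_theorem_of_algebra that by blast
qed

text \<open>A maximal partial homomorphism is defined on all of \<open>Q\<^sup>a\<^sup>l\<close>: otherwise it extends to
  \<open>E[y]\<close> by sending \<open>y\<close> to a root of the conjugate of its minimal polynomial over \<open>E\<close>.\<close>
lemma maximal_hom_graph_ext_total: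
  assumes M: "hom_graph_ext G0 M" and max: "\<And>G. hom_graph_ext G0 G \<Longrightarrow> M \<subseteq> G \<Longrightarrow> G = M"
  shows "Domain M = Qal"
proof (rule ccontr)
  assume "Domain M \<noteq> Qal"
  define E where "E = Domain M"
  define \<sigma> where "\<sigma> = graph_fun M"
  have E: "is_subfield E" "E \<subseteq> Qal" and \<sigma>: "field_hom_on E \<sigma>"
    using hom_graph_ext_D(4,5)[OF M] hom_graph_ext_field_hom[OF M] by (simp_all add: E_def \<sigma>_def)
  obtain y where y: "y \<in> Qal" "y \<notin> E"
    using \<open>Domain M \<noteq> Qal\<close> E(2) by (auto simp: E_def)
  have alg: "algebraic y"
    using y(1) by (simp add: Qal_def)
  obtain y' where "poly (map_poly \<sigma> (min_poly E y)) y' = 0"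
    using conjugate_min_poly_root[OF E(1) \<sigma> alg] .
  then obtain \<tau> where \<tau>: "field_hom_on (adjoin E y) \<tau>" "\<forall>a\<in>E. \<tau> a = \<sigma> a"
    using field_hom_on_adjoin_extend[OF E(1) \<sigma> alg] by blast
  have sv: "single_valued M" and "G0 \<subseteq> M"
    using hom_graph_ext_D(1,2)[OF M] by simp_all
  define G where "G = {(z, \<tau> z) | z. z \<in> adjoin E y}"
  have "M \<subseteq> G"
  proof
    fix p assume "p \<in> M"
    moreover obtain a b where p: "p = (a, b)"
      by fastforce
    ultimately have "a \<in> E" "b = \<sigma> a"
      using graph_fun_eq[OF sv] by (auto simp: E_def \<sigma>_def)
    then show "p \<in> G"
      using \<tau>(2) subset_adjoin[OF E y(1)] p by (auto simp: G_def)
  qed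
  moreover have "hom_graph_ext G0 G"
    using hom_graph_ext_graph[OF adjoin_subfield[OF E y(1)] adjoin_subset_Qal[OF E y(1)] \<tau>(1)]
      \<open>M \<subseteq> G\<close> \<open>G0 \<subseteq> M\<close> by (simp add: G_def)
  ultimately have "G = M"
    using max by blast
  moreover have "y \<in> Domain G"
    using in_adjoin[OF E y(1)] by (auto simp: G_def)
  ultimately show False
    using y(2) by (simp add: E_def)
qed

lemma gal_aut_extend:
  assumes E: "is_subfield E" "E \<subseteq> Qal" and \<tau>: "field_hom_on E \<tau>"
  obtains \<sigma> where "gal_aut \<sigma>" "\<forall>a\<in>E. \<sigma> a = \<tau> a"
proof -
  define G0 where "G0 = {(z, \<tau> z) | z. z \<in> E}"
  have G0: "hom_graph_ext G0 G0"
    using hom_graph_ext_graph[OF E \<tau>] by (simp add: G0_def)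
  have "\<exists>M\<in>{G. hom_graph_ext G0 G}. \<forall>G\<in>{G. hom_graph_ext G0 G}. M \<subseteq> G \<longrightarrow> G = M"
  proof (rule Zorn_Lemma2, rule ballI)
    fix C assume C: "C \<in> chains {G. hom_graph_ext G0 G}"
    show "\<exists>U\<in>{G. hom_graph_ext G0 G}. \<forall>X\<in>C. X \<subseteq> U"
    proof (cases "C = {}")
      case False
      have "\<forall>X\<in>C. X \<subseteq> \<Union>C"
        by blast
      then show ?thesis
        using hom_graph_ext_Union_chain[OF C False] by blast
    qed (use G0 in blast)
  qed
  then obtain M where M: "hom_graph_ext G0 M"
    and max: "\<And>G. hom_graph_ext G0 G \<Longrightarrow> M \<subseteq> G \<Longrightarrow> G = M"
    by blast
  show ?thesis
  proof (rule that)
    show "gal_aut (graph_fun M)"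
      using hom_graph_ext_field_hom[OF M] maximal_hom_graph_ext_total[OF M max]
      by (simp add: field_hom_on_Qal_gal_aut)
    show "\<forall>a\<in>E. graph_fun M a = \<tau> a"
    proof
      fix a assume "a \<in> E"
      then have "(a, \<tau> a) \<in> M"
        using hom_graph_ext_D(1)[OF M] by (auto simp: G0_def)
      then show "graph_fun M a = \<tau> a"
        by (rule graph_fun_eq[OF hom_graph_ext_D(2)[OF M]])
    qed
  qed
qed

lemma gal_aut_moving:
  assumes L: "is_subfield L" "L \<subseteq> Qal" and x: "x \<in> Qal" "x \<notin> L"
  obtains \<sigma> where "gal_aut \<sigma>" "\<forall>a\<in>L. \<sigma> a = a" "\<sigma> x \<noteq> x"
proof -
  have alg: "algebraic x"
    using x(1) by (simp add: Qal_def)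
  obtain x' where x': "poly (min_poly L x) x' = 0" "x' \<noteq> x"
    using min_poly_other_root[OF L(1) alg x(2)] by blast
  have id: "field_hom_on L (\<lambda>z. z)"
    by (simp add: field_hom_on_def)
  obtain \<tau> where \<tau>: "field_hom_on (adjoin L x) \<tau>" "\<forall>a\<in>L. \<tau> a = a" "\<tau> x = x'"
    using field_hom_on_adjoin_extend[OF L(1) id alg] x'(1) by auto
  obtain \<sigma> where \<sigma>: "gal_aut \<sigma>" "\<forall>a\<in>adjoin L x. \<sigma> a = \<tau> a"
    using gal_aut_extend[OF adjoin_subfield[OF L x(1)] adjoin_subset_Qal[OF L x(1)] \<tau>(1)] .
  have "\<forall>a\<in>L. \<sigma> a = a"
    using \<sigma>(2) \<tau>(2) subset_adjoin[OF L x(1)] by auto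
  moreover have "\<sigma> x \<noteq> x"
    using \<sigma>(2) \<tau>(3) x'(2) in_adjoin[OF L x(1)] by auto
  ultimately show ?thesis
    using that \<sigma>(1) by blast
qed

lemma gen_field_subfield: "is_subfield (gen_field a)"
  by (auto simp: gen_field_def is_subfield_def)

lemma gen_field_least: "is_subfield F \<Longrightarrow> a \<in> F \<Longrightarrow> gen_field a \<subseteq> F"
  and in_gen_field: "a \<in> gen_field a"
  by (auto simp: gen_field_def)

lemma fixed_field_gal_aut_subfield:
  assumes "gal_aut \<sigma>"
  shows "is_subfield {z \<in> Qal. \<sigma> z = z}"
proof -
  note hom = Qal_subfield gal_aut_field_hom[OF assms]
  show ?thesis
    unfolding is_subfield_def
    by (simp add: subfield_0[OF Qal_subfield] subfield_1[OF Qal_subfield] subfield_add[OF Qal_subfield]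
      subfield_mult[OF Qal_subfield] subfield_uminus[OF Qal_subfield] subfield_inverse[OF Qal_subfield]
      hom_0[OF hom] hom_1[OF hom] hom_add[OF hom] hom_mult[OF hom] hom_uminus[OF hom] hom_inverse[OF hom])
qed

theorem fixed_field_stabilizer_of_element:
  assumes "\<gamma> \<in> Qal"
  shows "fixed_field {\<sigma>. gal_aut \<sigma> \<and> \<sigma> \<gamma> = \<gamma>} = gen_field \<gamma>"
proof
  have gen_Qal: "gen_field \<gamma> \<subseteq> Qal"
    by (rule gen_field_least[OF Qal_subfield assms])
  show "gen_field \<gamma> \<subseteq> fixed_field {\<sigma>. gal_aut \<sigma> \<and> \<sigma> \<gamma> = \<gamma>}"
    using gen_field_least[OF fixed_field_gal_aut_subfield] assms gen_Qal
    by (fastforce simp: fixed_field_def)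
  show "fixed_field {\<sigma>. gal_aut \<sigma> \<and> \<sigma> \<gamma> = \<gamma>} \<subseteq> gen_field \<gamma>"
  proof
    fix x assume x: "x \<in> fixed_field {\<sigma>. gal_aut \<sigma> \<and> \<sigma> \<gamma> = \<gamma>}"
    show "x \<in> gen_field \<gamma>"
    proof (rule ccontr)
      assume "x \<notin> gen_field \<gamma>"
      then obtain \<sigma> where "gal_aut \<sigma>" "\<forall>a\<in>gen_field \<gamma>. \<sigma> a = a" "\<sigma> x \<noteq> x"
        using gal_aut_moving[OF gen_field_subfield gen_Qal] x by (auto simp: fixed_field_def)
      then show False
        using x in_gen_field by (auto simp: fixed_field_def)
    qed
  qed
qed

section \<open>Roots of unity in a number field\<close>

lemma map_poly_of_rat_add:
  "map_poly of_rat (p + q) = map_poly of_rat p + (map_poly of_rat q :: 'a :: field_char_0 poly)"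
  by (intro poly_eqI) (simp add: coeff_map_poly of_rat_add)

lemma map_poly_of_rat_mult:
  "map_poly of_rat (p * q) = map_poly of_rat p * (map_poly of_rat q :: 'a :: field_char_0 poly)"
  by (intro poly_eqI) (simp add: coeff_map_poly coeff_mult of_rat_sum of_rat_mult)

lemma map_poly_of_int_mult:
  "map_poly of_int (p * q) = map_poly of_int p * (map_poly of_int q :: 'a :: comm_ring_1 poly)"
  by (intro poly_eqI) (simp add: coeff_map_poly coeff_mult)

lemma map_poly_of_int_eq_iff:
  "map_poly (of_int :: int \<Rightarrow> 'a :: {comm_ring_1, ring_char_0}) p = map_poly of_int q \<longleftrightarrow> p = q"
  by (auto simp: poly_eq_iff coeff_map_poly)

lemma rat_poly_int_multiple:
  obtains a :: int and G where "a > 0" "map_poly of_int G = smult (of_int a) (g :: rat poly)"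
proof (induction g arbitrary: thesis)
  case 0
  show ?case
    by (rule 0[of 1 0]) simp_all
next
  case (pCons c g)
  obtain a G where aG: "a > 0" "map_poly of_int G = smult (of_int a) g"
    using pCons.IH by blast
  obtain u v where uv: "c = of_int u / of_int v" "v > 0"
    by (metis Fract_of_int_quotient Rat_cases)
  have "map_poly of_int (pCons (u * a) (smult v G)) = smult (of_int (a * v)) (pCons c g)"
    using aG(2) uv by (simp add: map_poly_pCons map_poly_smult field_simps)
  moreover have "a * v > 0"
    using aG(1) uv(2) by simp
  ultimately show ?case
    by (rule pCons.prems[rotated])
qed

lemma monic_rat_poly_primitive_multiple:
  assumes "lead_coeff (g :: rat poly) = 1"
  obtains G where "content G = 1" "lead_coeff G > 0"
    "map_poly of_int G = smult (of_int (lead_coeff G)) g"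
proof -
  obtain a G0 where a: "a > 0" and G0: "map_poly of_int G0 = smult (of_int a) g"
    by (rule rat_poly_int_multiple)
  have "G0 \<noteq> 0"
    using a G0 assms by (auto simp: map_poly_eq_0_iff)
  define c where "c = content G0"
  define G where "G = primitive_part G0"
  have "\<bar>c\<bar> = c"
    using normalize_content[of G0] by (simp add: c_def)
  moreover have "c \<noteq> 0"
    using \<open>G0 \<noteq> 0\<close> by (simp add: c_def)
  ultimately have c: "c > 0"
    by (metis abs_ge_zero order_le_less)
  have "G0 = smult c G"
    by (simp add: c_def G_def)
  then have "smult (of_int c) (map_poly of_int G) = smult (of_int a) g"
    using G0 by (simp add: map_poly_smult)
  then have "smult (inverse (of_int c)) (smult (of_int c) (map_poly of_int G))
      = smult (inverse (of_int c)) (smult (of_int a) g)"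
    by simp
  then have G: "map_poly of_int G = smult (of_int a / of_int c) g"
    using c by (simp add: divide_inverse mult.commute)
  have "of_int (lead_coeff G) = lead_coeff (map_poly of_int G :: rat poly)"
    by (simp add: degree_map_poly coeff_map_poly)
  also have "\<dots> = of_int a / of_int c"
    using assms G by simp
  finally have lead_G: "of_int (lead_coeff G) = (of_int a / of_int c :: rat)" .
  then have "lead_coeff G > 0"
    using a c by (metis divide_pos_pos of_int_0_less_iff)
  moreover have "content G = 1"
    using \<open>G0 \<noteq> 0\<close> by (simp add: G_def)
  ultimately show ?thesis
    using that G lead_G by simp
qed

lemma monic_factor_int_poly:
  assumes g: "lead_coeff (g :: rat poly) = 1" and dvd: "g dvd map_poly of_int F"
    and F: "lead_coeff F = 1"
  obtains G where "map_poly of_int G = g"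
proof -
  obtain h where h: "map_poly of_int F = g * h"
    using dvd by (rule dvdE)
  have "lead_coeff (map_poly of_int F :: rat poly) = 1"
    using F by (simp add: degree_map_poly coeff_map_poly)
  then have h_monic: "lead_coeff h = 1"
    using g h by (simp add: lead_coeff_mult)
  have "content F = 1"
    using content_dvd_coeff[of F "degree F"] F normalize_content[of F] by simp
  obtain G where G: "content G = 1" "lead_coeff G > 0"
      "map_poly of_int G = smult (of_int (lead_coeff G)) g"
    using monic_rat_poly_primitive_multiple[OF g] by blast
  obtain H where H: "content H = 1" "lead_coeff H > 0"
      "map_poly of_int H = smult (of_int (lead_coeff H)) h"
    using monic_rat_poly_primitive_multiple[OF h_monic] by blast
  have "map_poly of_int (G * H)
      = (map_poly of_int (smult (lead_coeff G * lead_coeff H) F) :: rat poly)"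
    by (simp add: map_poly_of_int_mult map_poly_smult G(3) H(3) h mult_ac)
  then have "G * H = smult (lead_coeff G * lead_coeff H) F"
    by (simp only: map_poly_of_int_eq_iff)
  then have "content (G * H) = content (smult (lead_coeff G * lead_coeff H) F)"
    by simp
  then have "lead_coeff G * lead_coeff H = 1"
    using G(2) H(2) by (simp add: content_mult G(1) H(1) \<open>content F = 1\<close> abs_mult)
  then have "lead_coeff G = 1"
    using G(2) pos_zmult_eq_1_iff by blast
  then show ?thesis
    using that G(3) by simp
qed

lemma poly_of_rat_gcd_eq_0:
  fixes z :: "'a :: field_char_0"
  assumes "poly (map_poly of_rat P) z = 0" "poly (map_poly of_rat Q) z = 0"
  shows "poly (map_poly of_rat (gcd P Q)) z = 0"
proof -
  obtain u v where uv: "u * P + v * Q = gcd P Q"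
    using bezout_coefficients_fst_snd[of P Q] by blast
  have "map_poly of_rat (gcd P Q)
      = map_poly of_rat u * map_poly of_rat P + map_poly of_rat v * (map_poly of_rat Q :: 'a poly)"
    unfolding uv[symmetric] by (simp add: map_poly_of_rat_add map_poly_of_rat_mult)
  then show ?thesis
    using assms by simp
qed

lemma map_poly_X_pow_minus_1:
  assumes "f 0 = 0" "f 1 = 1" "\<And>x y. f (x - y) = f x - f y"
  shows "map_poly f (monom 1 k - 1) = monom 1 k - 1"
  by (intro poly_eqI) (auto simp: assms coeff_map_poly coeff_monom coeff_1)

lemma lead_coeff_X_pow_minus_1:
  assumes "k > 0"
  shows "lead_coeff (monom 1 k - 1 :: 'a :: comm_ring_1 poly) = 1"
proof -
  have "coeff (monom 1 k - 1 :: 'a poly) k = 1"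
    and "\<And>n. n > k \<Longrightarrow> coeff (monom 1 k - 1 :: 'a poly) n = 0"
    using assms by (auto simp: coeff_monom)
  moreover from this have "degree (monom 1 k - 1 :: 'a poly) = k"
    by (intro antisym degree_le le_degree) auto
  ultimately show ?thesis
    by simp
qed

lemma coeff_prod_linear_bound:
  fixes r :: "nat \<Rightarrow> complex"
  assumes "finite I" "\<forall>i\<in>I. cmod (r i) \<le> 1"
  shows "cmod (coeff (\<Prod>i\<in>I. [:-r i, 1:]) j) \<le> 2 ^ card I"
  using assms
proof (induction I arbitrary: j rule: finite_induct)
  case empty
  then show ?case
    by (simp add: coeff_1)
next
  case (insert x F)
  define q where "q = (\<Prod>i\<in>F. [:-r i, 1:])"
  have IH: "cmod (coeff q j) \<le> 2 ^ card F" for j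
    using insert by (simp add: q_def)
  have "coeff (\<Prod>i\<in>insert x F. [:-r i, 1:]) j = - r x * coeff q j + coeff (pCons 0 q) j"
    using insert(1,2) by (simp add: q_def)
  also have "cmod \<dots> \<le> cmod (r x) * cmod (coeff q j) + cmod (coeff (pCons 0 q) j)"
    by (metis norm_minus_cancel norm_mult norm_triangle_ineq)
  also have "\<dots> \<le> 1 * 2 ^ card F + 2 ^ card F"
    using insert(4) IH[of j] IH[of "j - 1"]
    by (intro add_mono mult_mono) (auto simp: coeff_pCons split: nat.splits)
  finally show ?case
    using insert(1,2) by simp
qed

lemma monic_coeff_bound:
  fixes p :: "complex poly"
  assumes "lead_coeff p = 1" "\<And>z. poly p z = 0 \<Longrightarrow> cmod z \<le> 1"
  shows "cmod (coeff p j) \<le> 2 ^ degree p"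
proof -
  obtain root where "smult (lead_coeff p) (\<Prod>i<degree p. [:-root i, 1:]) = p"
    using complex_poly_decompose' by blast
  then have p: "p = (\<Prod>i<degree p. [:-root i, 1:])"
    using assms(1) by simp
  have "cmod (root i) \<le> 1" if "i < degree p" for i
  proof (rule assms(2))
    show "poly p (root i) = 0"
      using that by (subst p) (auto simp: poly_prod prod_zero_iff)
  qed
  then show ?thesis
    using coeff_prod_linear_bound[of "{..<degree p}" root j] by (subst p) simp
qed

lemma coeff_bound_dvd_X_pow_minus_1:
  fixes q :: "complex poly"
  assumes "lead_coeff q = 1" "q dvd monom 1 k - 1" "k > 0"
  shows "cmod (coeff q i) \<le> 2 ^ degree q"
proof (rule monic_coeff_bound[OF assms(1)])
  fix z assume "poly q z = 0"
  obtain r where "monom 1 k - 1 = q * r"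
    using assms(2) by (rule dvdE)
  then have "poly (monom 1 k - 1) z = 0"
    using \<open>poly q z = 0\<close> by (metis mult_zero_left poly_mult)
  then have "cmod z ^ k = 1"
    by (simp add: poly_monom flip: norm_power)
  then show "cmod z \<le> 1"
    using assms(3) power_eq_iff_eq_base[of k "cmod z" 1] by simp
qed

lemma finite_bounded_int_polys: "finite {G :: int poly. degree G \<le> N \<and> (\<forall>i. \<bar>coeff G i\<bar> \<le> b)}"
proof (rule finite_subset)
  show "{G :: int poly. degree G \<le> N \<and> (\<forall>i. \<bar>coeff G i\<bar> \<le> b)}
      \<subseteq> Poly ` {xs. set xs \<subseteq> {-b..b} \<and> length xs \<le> Suc N}"
  proof
    fix G :: "int poly" assume G: "G \<in> {G. degree G \<le> N \<and> (\<forall>i. \<bar>coeff G i\<bar> \<le> b)}"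
    have "coeff G i \<in> {-b..b}" for i
    proof -
      have "\<bar>coeff G i\<bar> \<le> b"
        using G by blast
      then show ?thesis
        by (auto simp: abs_le_iff)
    qed
    then have "set (coeffs G) \<subseteq> {-b..b}"
      by (auto simp: coeffs_def)
    moreover have "length (coeffs G) \<le> Suc N"
      using G by (cases "G = 0") (simp_all add: length_coeffs_degree)
    ultimately show "G \<in> Poly ` {xs. set xs \<subseteq> {-b..b} \<and> length xs \<le> Suc N}"
      by (intro image_eqI[of _ _ "coeffs G"]) simp_all
  qed
  show "finite (Poly ` {xs. set xs \<subseteq> {-b..b} \<and> length xs \<le> Suc N})"
    by (intro finite_imageI finite_lists_length_le) simp
qed

text \<open>\<open>G\<close> is the monic \<open>gcd\<close> of \<open>P\<close> and \<open>X\<^sup>k - 1\<close>: it has integer coefficients by Gauss's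
  lemma, and its roots lie on the unit circle.\<close>
lemma root_of_unity_bounded_int_poly:
  fixes \<zeta> :: complex and P :: "rat poly"
  assumes k: "k > 0" "\<zeta> ^ k = 1"
    and P: "P \<noteq> 0" "degree P \<le> N" "poly (map_poly of_rat P) \<zeta> = 0"
  obtains G :: "int poly" where "G \<noteq> 0" "degree G \<le> N" "\<forall>i. \<bar>coeff G i\<bar> \<le> 2 ^ N"
    "poly (map_poly of_int G) \<zeta> = 0"
proof -
  define F :: "rat poly" where "F = monom 1 k - 1"
  have F_int: "F = map_poly of_int (monom 1 k - 1)" and F_complex: "map_poly of_rat F = monom 1 k - 1"
    by (simp_all add: F_def map_poly_X_pow_minus_1 of_rat_diff)
  define g where "g = gcd P F"
  have "g \<noteq> 0"
    using P(1) by (simp add: g_def)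
  moreover have "unit_factor g = 1"
    using \<open>g \<noteq> 0\<close> by (simp add: g_def unit_factor_gcd)
  ultimately have g_monic: "lead_coeff g = 1"
    by (simp add: unit_factor_poly_def one_pCons)
  have "g dvd F"
    by (simp add: g_def)
  then obtain G where G: "map_poly of_int G = g"
    using monic_factor_int_poly[OF g_monic] lead_coeff_X_pow_minus_1[OF k(1)] by (metis F_int)
  define q :: "complex poly" where "q = map_poly of_int G"
  have q_g: "q = map_poly of_rat g"
    by (simp add: q_def G[symmetric] map_poly_map_poly o_def)
  have "degree g \<le> N"
    using dvd_imp_degree_le[of g P] P(1,2) by (simp add: g_def)
  then have degree_q: "degree q \<le> N"
    by (simp add: q_g degree_map_poly)
  have "poly q \<zeta> = 0"
    unfolding q_g g_def using P(3) k(2) by (intro poly_of_rat_gcd_eq_0) (simp_all add: F_complex poly_monom)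
  have "q dvd monom 1 k - 1"
    using \<open>g dvd F\<close> by (auto simp: q_g F_complex[symmetric] map_poly_of_rat_mult elim!: dvdE)
  have "lead_coeff q = 1"
    using g_monic by (simp add: q_g degree_map_poly coeff_map_poly)
  have "cmod (coeff q i) \<le> 2 ^ N" for i
  proof -
    have "cmod (coeff q i) \<le> 2 ^ degree q"
      by (rule coeff_bound_dvd_X_pow_minus_1[OF \<open>lead_coeff q = 1\<close> \<open>q dvd _\<close> k(1)])
    also have "\<dots> \<le> 2 ^ N"
      using degree_q by (simp add: power_increasing)
    finally show ?thesis .
  qed
  then have "\<bar>coeff G i\<bar> \<le> 2 ^ N" for i
    by (simp add: q_def coeff_map_poly flip: of_int_abs)
  moreover have "G \<noteq> 0" "degree G \<le> N"
    using G \<open>g \<noteq> 0\<close> \<open>degree g \<le> N\<close> by (auto simp: degree_map_poly simp flip: G)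
  ultimately show ?thesis
    using that[of G] \<open>poly q \<zeta> = 0\<close> unfolding q_def by blast
qed

lemma roots_of_unity_finite:
  assumes K: "is_subfield K" "finite_over_Q K"
  shows "finite (roots_of_unity_in K)"
proof -
  obtain B where B: "finite B" "K \<subseteq> {\<Sum>b\<in>B. of_rat (c b) * b | c. True}"
    using K(2) by (auto simp: finite_over_Q_def)
  have K_span: "K \<subseteq> Q.span B"
    using B(2) by (force intro: Q.span_sum Q.span_scale Q.span_base)
  define N where "N = card B"
  define \<G> where "\<G> = {G :: int poly. G \<noteq> 0 \<and> degree G \<le> N \<and> (\<forall>i. \<bar>coeff G i\<bar> \<le> 2 ^ N)}"
  have "finite (\<Union>G\<in>\<G>. {z :: complex. poly (map_poly of_int G) z = 0})"
  proof (intro finite_UN_I)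
    show "finite \<G>"
      using finite_bounded_int_polys[of N "2 ^ N"] by (rule finite_subset[rotated]) (auto simp: \<G>_def)
    show "finite {z :: complex. poly (map_poly of_int G) z = 0}" if "G \<in> \<G>" for G
      using that by (intro poly_roots_finite) (auto simp: \<G>_def map_poly_eq_0_iff)
  qed
  moreover have "roots_of_unity_in K \<subseteq> (\<Union>G\<in>\<G>. {z. poly (map_poly of_int G) z = 0})"
  proof
    fix \<zeta> assume "\<zeta> \<in> roots_of_unity_in K"
    then obtain k where "\<zeta> \<in> K" "k > 0" "\<zeta> ^ k = 1"
      by (auto simp: roots_of_unity_in_def)
    then have "\<zeta> ^ j \<in> Q.span B" for j
      using K_span subfield_power[OF K(1)] by blast
    then obtain P where "P \<noteq> 0" "degree P \<le> N" "poly (map_poly of_rat P) \<zeta> = 0"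
      using rat_poly_root_if_powers_in_Q_span[OF B(1)] by (auto simp: N_def)
    then obtain G where "G \<noteq> 0" "degree G \<le> N" "\<forall>i. \<bar>coeff G i\<bar> \<le> 2 ^ N"
        "poly (map_poly of_int G) \<zeta> = 0"
      using root_of_unity_bounded_int_poly \<open>k > 0\<close> \<open>\<zeta> ^ k = 1\<close> by blast
    then show "\<zeta> \<in> (\<Union>G\<in>\<G>. {z. poly (map_poly of_int G) z = 0})"
      by (auto simp: \<G>_def)
  qed
  ultimately show ?thesis
    by (rule finite_subset[rotated])
qed

text \<open>Multiplication by \<open>z\<close> permutes the finite group of roots of unity, so comparing
  products gives \<open>z\<^sup>m = 1\<close> (Lagrange's theorem for this group).\<close>
lemma root_of_unity_pow_card:
  assumes K: "is_subfield K" and fin: "finite (roots_of_unity_in K)" and z: "z \<in> roots_of_unity_in K"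
  shows "z ^ card (roots_of_unity_in K) = 1"
proof -
  define R where "R = roots_of_unity_in K"
  have R_closed: "u * v \<in> R" if u: "u \<in> R" and v: "v \<in> R" for u v
  proof -
    obtain i j where "u \<in> K" "v \<in> K" "i > 0" "j > 0" "u ^ i = 1" "v ^ j = 1"
      using u v by (auto simp: R_def roots_of_unity_in_def)
    then have "(u * v) ^ (i * j) = 1" "u * v \<in> K" "i * j > 0"
      by (simp_all add: power_mult_distrib power_mult subfield_mult[OF K])
        (metis power_mult mult.commute power_one)
    then show ?thesis
      by (auto simp: R_def roots_of_unity_in_def intro!: exI[of _ "i * j"])
  qed
  have nonzero: "r \<noteq> 0" if "r \<in> R" for r
    using that by (auto simp: R_def roots_of_unity_in_def power_0_left)
  have "z \<in> R" "finite R"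
    using z fin by (simp_all add: R_def)
  have inj: "inj_on (\<lambda>r. z * r) R"
    using nonzero[OF \<open>z \<in> R\<close>] by (auto simp: inj_on_def)
  have "(\<lambda>r. z * r) ` R = R"
    using endo_inj_surj[OF \<open>finite R\<close> _ inj] R_closed[OF \<open>z \<in> R\<close>] by blast
  then have "prod (\<lambda>r. r) R = prod (\<lambda>r. z * r) R"
    using prod.reindex[OF inj, of "\<lambda>r. r"] by simp
  also have "\<dots> = z ^ card R * prod (\<lambda>r. r) R"
    by (simp add: prod.distrib)
  finally have "z ^ card R * prod (\<lambda>r. r) R = 1 * prod (\<lambda>r. r) R"
    by simp
  moreover have "prod (\<lambda>r. r) R \<noteq> 0"
    using nonzero \<open>finite R\<close> by simp
  ultimately show ?thesis
    by (simp add: R_def)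
qed

section \<open>The stabilizer of a Weil number\<close>

text \<open>If \<open>\<sigma>\<close> fixes the class of \<open>\<beta> = \<pi>\<^sup>n\<close>, then \<open>\<sigma>(\<beta>)/\<beta>\<close> is a root of unity in \<open>K\<close>, hence
  killed by \<open>m\<close>.\<close>
lemma stabilizer_eq_stabilizer_of_power:
  assumes K: "is_subfield K" "K \<subseteq> Qal" "\<And>\<sigma>. gal_aut \<sigma> \<Longrightarrow> \<sigma> ` K = K"
    and fin: "finite (roots_of_unity_in K)" and m: "m = card (roots_of_unity_in K)"
    and \<pi>: "\<pi> ^ n \<in> K" "\<pi> \<noteq> 0" and n: "n > 0"
  shows "stabilizer n \<pi> = {\<sigma>. gal_aut \<sigma> \<and> \<sigma> (\<pi> ^ (m * n)) = \<pi> ^ (m * n)}"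
proof -
  define \<beta> where "\<beta> = \<pi> ^ n"
  have \<beta>: "\<beta> \<in> K" "\<beta> \<in> Qal" "\<beta> \<noteq> 0"
    using \<pi> K(2) by (auto simp: \<beta>_def)
  have power_\<beta>: "\<pi> ^ (m * n) = \<beta> ^ m"
    by (simp add: \<beta>_def mult.commute[of m n] power_mult)
  have "1 \<in> roots_of_unity_in K"
    using subfield_1[OF K(1)] by (auto simp: roots_of_unity_in_def intro!: exI[of _ 1])
  then have "m > 0"
    using fin m card_gt_0_iff by blast
  have "\<sigma> \<in> stabilizer n \<pi> \<longleftrightarrow> \<sigma> (\<beta> ^ m) = \<beta> ^ m" if \<sigma>: "gal_aut \<sigma>" for \<sigma>
  proof
    assume "\<sigma> \<in> stabilizer n \<pi>"
    then obtain c where c: "c > 0" "n dvd c" "\<sigma> \<beta> ^ (c div n) = \<beta> ^ (c div n)"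
      by (auto simp: stabilizer_def lim_eq_def \<beta>_def)
    define \<zeta> where "\<zeta> = \<sigma> \<beta> / \<beta>"
    have "\<sigma> \<beta> \<in> K"
      using K(3)[OF \<sigma>] \<beta>(1) by blast
    then have "\<zeta> \<in> K"
      unfolding \<zeta>_def using \<beta>(1) by (rule subfield_divide[OF K(1)])
    moreover have "\<zeta> ^ (c div n) = 1" "c div n > 0"
      using c \<beta>(3) n by (auto simp: \<zeta>_def power_divide elim!: dvdE)
    ultimately have "\<zeta> \<in> roots_of_unity_in K"
      by (auto simp: roots_of_unity_in_def)
    then have "\<zeta> ^ m = 1"
      using root_of_unity_pow_card[OF K(1) fin] m by simp
    then show "\<sigma> (\<beta> ^ m) = \<beta> ^ m"
      using hom_power[OF Qal_subfield gal_aut_field_hom[OF \<sigma>] \<beta>(2)] \<beta>(3)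
      by (simp add: \<zeta>_def power_divide)
  next
    assume "\<sigma> (\<beta> ^ m) = \<beta> ^ m"
    then have "\<sigma> \<beta> ^ (m * n div n) = \<beta> ^ (m * n div n)"
      using hom_power[OF Qal_subfield gal_aut_field_hom[OF \<sigma>] \<beta>(2)] n by simp
    then show "\<sigma> \<in> stabilizer n \<pi>"
      using \<sigma> \<open>m > 0\<close> n by (auto simp: stabilizer_def lim_eq_def \<beta>_def intro!: exI[of _ "m * n"])
  qed
  then show ?thesis
    by (auto simp: power_\<beta> stabilizer_def)
qed

theorem mainTheorem9:
  fixes K :: "complex set" and p n m :: nat and \<pi> :: complex
  assumes "prime p"
    and "CM_galois_field K"
    and "n > 0"
    and "\<forall>w. padic_prime K p w \<longrightarrow> inertia_deg K p w * class_order K w dvd n"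
    and "m = card (roots_of_unity_in K)"
    and "\<pi> \<in> W0K_pn K p n"
  shows "fixed_field (stabilizer n \<pi>) = gen_field (\<pi> ^ (m * n))"
proof -
  have K: "is_subfield K" "K \<subseteq> Qal" "finite_over_Q K" "\<And>\<sigma>. gal_aut \<sigma> \<Longrightarrow> \<sigma> ` K = K"
    using assms(2) by (auto simp: CM_galois_field_def)
  have "gal_aut (\<lambda>z. z)"
    by (simp add: gal_aut_def bij_betw_def)
  then have "\<pi> \<noteq> 0" and \<pi>_n: "\<pi> ^ n \<in> K"
    using assms(6) by (auto simp: W0K_pn_def W0K_def weil0_def)
  have "stabilizer n \<pi> = {\<sigma>. gal_aut \<sigma> \<and> \<sigma> (\<pi> ^ (m * n)) = \<pi> ^ (m * n)}"
    using stabilizer_eq_stabilizer_of_power[OF K(1,2,4) roots_of_unity_finite[OF K(1,3)] assms(5)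
        \<pi>_n \<open>\<pi> \<noteq> 0\<close> assms(3)] .
  moreover have "\<pi> ^ (m * n) \<in> Qal"
    using \<pi>_n K(2) subfield_power[OF Qal_subfield] by (metis mult.commute power_mult subsetD)
  ultimately show ?thesis
    by (simp add: fixed_field_stabilizer_of_element)
qed

end
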